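(* Let $k=k_0m$ with $k_0\ge1$. For any initial condition $(X(0),Z(0),V_{s,\alpha}(0),W_{s,\alpha}(0))$ in $\mathcal M^\circ$, the flow at time $t$ of the Hamiltonian vector field $f\mapsto\{\tfrac1k\operatorname{tr}(Z^k),f\}$ is $X(t)=X(0)\exp(-tZ(0)^k)$, $Z(t)=Z(0)$, $V_{s,\alpha}(t)=V_{s,\alpha}(0)$, $W_{s,\alpha}(t)=W_{s,\alpha}(0)$.
   Context: Fix integers $m\ge2$, $n\ge1$ and $\mathbf d=(d_0,\dots,d_{m-1})\in\mathbb N^m$ with $d_0\ge1$. Indices $r,s$ range over $\mathbb Z_m$, identified with $\{0,\dots,m-1\}$ with its usual order; Kronecker deltas of such indices are taken modulo $m$. A spin index is a pair $(s,\alpha)$ with $s\in\mathbb Z_m$, $1\le\alpha\le d_s$. $\mathcal M^\bullet$ is the smooth affine variety of tuples $(X_s,Y_s,V_{s,\alpha},W_{s,\alpha})$, $X_s,Y_s\in\mathrm{Mat}(n\times n,\mathbb C)$, $V_{s,\alpha}\in\mathrm{Mat}(1\times n,\mathbb C)$, $W_{s,\alpha}\in\mathrm{Mat}(n\times1,\mathbb C)$, with $\mathrm{Id}_n+X_sY_s$, $\mathrm{Id}_n+Y_sX_s$, $\mathrm{Id}_n+W_{s,\alpha}V_{s,\alpha}$ invertible and $1+V_{s,\alpha}W_{s,\alpha}\ne0$. $X=\sum_sX_s$ is the $nm\times nm$ block matrix whose only nonzero $n\times n$ blocks are $X_s$ in block position $(s,s+1)$; $Y=\sum_sY_s$ has $Y_s$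 in block position $(s+1,s)$. $\mathcal M^\circ\subset\mathcal M^\bullet$ is the open subset where $X$ is invertible; there $Z_s=Y_s+X_s^{-1}$ and $Z=\sum_sZ_s$ with $Z_s$ in block $(s+1,s)$; points of $\mathcal M^\circ$ are equivalently described by $(X,Z,V_{s,\alpha},W_{s,\alpha})$. For a function $F$, the Hamiltonian vector field is $f\mapsto\{F,f\}$ and its flow solves $\frac{d}{dt}f=\{F,f\}$ entrywise. The quasi-Poisson bracket $\{-,-\}$ on $\mathcal M^\bullet$ is the antisymmetric biderivation given on entry functions by ($o(s,r)=\operatorname{sgn}(r-s)$ computed in $\{0,\dots,m-1\}$, $o(\alpha,\beta)=\operatorname{sgn}(\beta-\alpha)$): $\{(X_r)_{ij},(X_s)_{kl}\}=\tfrac12\delta_{s,r-1}(X_{r-1}X_r)_{kj}\delta_{il}-\tfrac12\delta_{s,r+1}\delta_{kj}(X_rX_{r+1})_{il}$; $\{(Y_r)_{ij},(Y_s)_{kl}\}=\tfrac12\delta_{s,r-1}\delta_{kj}(Y_rY_{r-1})_{il}-\tfrac12\delta_{s,r+1}(Y_{r+1}Y_r)_{kj}\delta_{il}$; $\{(X_r)_{ij},(Y_s)_{kl}\}=\delta_{sr}\big(\delta_{kj}\delta_{il}+\tfrac12(Y_rX_r)_{kj}\delta_{il}+\tfrac12\delta_{kj}(X_rY_r)_{il}\big)-\tfrac12\delta_{s,r-1}(X_r)_{kj}(Y_{r-1})_{il}+\tfrac12\delta_{s,r+1}(Y_{r+1})_{kj}(X_r)_{il}$; $\{(X_r)_{ij},(W_{s,\alpha})_k\}=\tfrac12\delta_{s,r+1}\delta_{kj}(X_rW_{r+1,\alpha})_i-\tfrac12\delta_{rs}(X_r)_{kj}(W_{r,\alpha})_i$;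 $\{(X_r)_{ij},(V_{s,\alpha})_l\}=\tfrac12\delta_{rs}(V_{r,\alpha}X_r)_j\delta_{il}-\tfrac12\delta_{s,r+1}(V_{r+1,\alpha})_j(X_r)_{il}$; $\{(Y_r)_{ij},(W_{s,\alpha})_k\}=\tfrac12\delta_{rs}\delta_{kj}(Y_rW_{r,\alpha})_i-\tfrac12\delta_{s,r+1}(Y_r)_{kj}(W_{r+1,\alpha})_i$; $\{(Y_r)_{ij},(V_{s,\alpha})_l\}=\tfrac12\delta_{s,r+1}(V_{r+1,\alpha}Y_r)_j\delta_{il}-\tfrac12\delta_{rs}(V_{r,\alpha})_j(Y_r)_{il}$; $\{(V_{s,\alpha})_j,(V_{r,\beta})_l\}=-\tfrac12o(s,r)(V_{s,\alpha})_j(V_{r,\beta})_l-\tfrac12\delta_{sr}o(\alpha,\beta)\big((V_{r,\beta})_j(V_{s,\alpha})_l+(V_{s,\alpha})_j(V_{r,\beta})_l\big)$; $\{(W_{s,\alpha})_i,(W_{r,\beta})_k\}=-\tfrac12o(s,r)(W_{r,\beta})_k(W_{s,\alpha})_i-\tfrac12\delta_{sr}o(\alpha,\beta)\big((W_{r,\beta})_k(W_{s,\alpha})_i+(W_{s,\alpha})_k(W_{r,\beta})_i\big)$; $\{(V_{s,\alpha})_j,(W_{r,\beta})_k\}=\tfrac12o(s,r)(W_{r,\beta})_k(V_{s,\alpha})_j+\delta_{sr}\delta_{\alpha\beta}\big(\delta_{kj}+\tfrac12(W_{r,\beta})_k(V_{s,\alpha})_j+\tfrac12\delta_{kj}V_{s,\alpha}W_{r,\beta}\big)+\tfrac12\delta_{sr}o(\alpha,\beta)\big(\delta_{kj}V_{s,\alpha}W_{r,\beta}+(W_{r,\beta})_k(V_{s,\alpha})_j\big)$.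 *)

theory Defs
  imports "HOL-Analysis.Analysis"
begin

section \<open>Coordinates on the space of tuples (X_s, Y_s, V_{s,alpha}, W_{s,alpha})\<close>

text \<open>The size n of the square matrices is CARD('n) for a finite index type 'n.
  The cyclic index s ranges over {0..<m} (identified with Z_m), the spin
  index alpha over {0..<d s} (0-based instead of 1-based).
  CX s i j is the (i,j) entry of X_s, CY s i j that of Y_s,
  CV s a j the j-th entry of the row vector V_{s,a},
  CW s a k the k-th entry of the column vector W_{s,a}.\<close>

datatype 'n coord = CX nat 'n 'n | CY nat 'n 'n | CV nat nat 'n | CW nat nat 'n

type_synonym 'n point = "'n coord \<Rightarrow> complex"

definition coords :: "nat \<Rightarrow> (nat \<Rightarrow> nat) \<Rightarrow> ('n::finite) coord set" where
  "coords m d =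
     {CX s i j | s i j. s < m} \<union> {CY s i j | s i j. s < m}
   \<union> {CV s a j | s a j. s < m \<and> a < d s} \<union> {CW s a j | s a j. s < m \<and> a < d s}"

definition Xm :: "('n::finite) point \<Rightarrow> nat \<Rightarrow> complex^'n^'n" where
  "Xm p s = (\<chi> i j. p (CX s i j))"
definition Ym :: "('n::finite) point \<Rightarrow> nat \<Rightarrow> complex^'n^'n" where
  "Ym p s = (\<chi> i j. p (CY s i j))"
definition Vv :: "('n::finite) point \<Rightarrow> nat \<Rightarrow> nat \<Rightarrow> complex^'n" where
  "Vv p s a = (\<chi> j. p (CV s a j))"
definition Wv :: "('n::finite) point \<Rightarrow> nat \<Rightarrow> nat \<Rightarrow> complex^'n" where
  "Wv p s a = (\<chi> j. p (CW s a j))"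

definition sucm :: "nat \<Rightarrow> nat \<Rightarrow> nat" where "sucm m r = (r + 1) mod m"
definition predm :: "nat \<Rightarrow> nat \<Rightarrow> nat" where "predm m r = (r + m - 1) mod m"

definition dlt :: "'a \<Rightarrow> 'a \<Rightarrow> complex" where "dlt a b = (if a = b then 1 else 0)"

definition ord_sgn :: "nat \<Rightarrow> nat \<Rightarrow> complex" where
  "ord_sgn s r = of_int (sgn (int r - int s))"

definition rowcol :: "complex^('n::finite) \<Rightarrow> complex^'n \<Rightarrow> complex" where
  "rowcol v w = (\<Sum>l\<in>UNIV. v $ l * w $ l)"

section \<open>Big block matrices (nm x nm), represented by their n x n blocks\<close>

type_synonym 'n bmat = "nat \<Rightarrow> nat \<Rightarrow> complex^'n^'n"

definition bmul :: "nat \<Rightarrow> ('n::finite) bmat \<Rightarrow> 'n bmat \<Rightarrow> 'n bmat" where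
  "bmul m A B = (\<lambda>a b. \<Sum>c<m. A a c ** B c b)"

definition bid :: "nat \<Rightarrow> ('n::finite) bmat" where
  "bid m = (\<lambda>a b. if a = b then mat 1 else 0)"

definition bpow :: "nat \<Rightarrow> ('n::finite) bmat \<Rightarrow> nat \<Rightarrow> 'n bmat" where
  "bpow m A j = ((bmul m A) ^^ j) (bid m)"

definition btrace :: "nat \<Rightarrow> ('n::finite) bmat \<Rightarrow> complex" where
  "btrace m A = (\<Sum>a<m. trace (A a a))"

definition binvertible :: "nat \<Rightarrow> ('n::finite) bmat \<Rightarrow> bool" where
  "binvertible m A \<longleftrightarrow> (\<exists>B. (\<forall>a<m. \<forall>b<m. bmul m A B a b = bid m a b \<and> bmul m B A a b = bid m a b))"

definition bexp :: "nat \<Rightarrow> ('n::finite) bmat \<Rightarrow> 'n bmat" where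
  "bexp m A = (\<lambda>a b. \<Sum>j. (1 / fact j) *\<^sub>R bpow m A j a b)"

definition Xbig :: "nat \<Rightarrow> ('n::finite) point \<Rightarrow> 'n bmat" where
  "Xbig m p = (\<lambda>a b. if b = sucm m a then Xm p a else 0)"

definition Ybig :: "nat \<Rightarrow> ('n::finite) point \<Rightarrow> 'n bmat" where
  "Ybig m p = (\<lambda>a b. if a = sucm m b then Ym p b else 0)"

definition Zs :: "('n::finite) point \<Rightarrow> nat \<Rightarrow> complex^'n^'n" where
  "Zs p s = Ym p s + matrix_inv (Xm p s)"

definition Zbig :: "nat \<Rightarrow> ('n::finite) point \<Rightarrow> 'n bmat" where
  "Zbig m p = (\<lambda>a b. if a = sucm m b then Zs p b else 0)"

definition outer :: "complex^('n::finite) \<Rightarrow> complex^'n \<Rightarrow> complex^'n^'n" where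
  "outer w v = (\<chi> i j. w $ i * v $ j)"

definition Mbullet :: "nat \<Rightarrow> (nat \<Rightarrow> nat) \<Rightarrow> ('n::finite) point set" where
  "Mbullet m d = {p. \<forall>s<m.
      invertible (mat 1 + Xm p s ** Ym p s) \<and> invertible (mat 1 + Ym p s ** Xm p s) \<and>
      (\<forall>a<d s. invertible (mat 1 + outer (Wv p s a) (Vv p s a)) \<and>
               1 + rowcol (Vv p s a) (Wv p s a) \<noteq> 0)}"

definition Mcirc :: "nat \<Rightarrow> (nat \<Rightarrow> nat) \<Rightarrow> ('n::finite) point set" where
  "Mcirc m d = {p \<in> Mbullet m d. binvertible m (Xbig m p)}"

section \<open>The quasi-Poisson bracket on coordinate functions\<close>

text \<open>Order of constructors: X < Y < V < W. qbr0 gives the bracket for pairs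
  listed in the paper; qbr extends by antisymmetry.\<close>

fun crank :: "'n coord \<Rightarrow> nat" where
  "crank (CX _ _ _) = 0" | "crank (CY _ _ _) = 1" | "crank (CV _ _ _) = 2" | "crank (CW _ _ _) = 3"

fun qbr0 :: "nat \<Rightarrow> ('n::finite) coord \<Rightarrow> 'n coord \<Rightarrow> 'n point \<Rightarrow> complex" where
  "qbr0 m (CX r i j) (CX s k l) p =
     1/2 * dlt s (predm m r) * (Xm p (predm m r) ** Xm p r) $ k $ j * dlt i l
   - 1/2 * dlt s (sucm m r) * dlt k j * (Xm p r ** Xm p (sucm m r)) $ i $ l"
| "qbr0 m (CY r i j) (CY s k l) p =
     1/2 * dlt s (predm m r) * dlt k j * (Ym p r ** Ym p (predm m r)) $ i $ l
   - 1/2 * dlt s (sucm m r) * (Ym p (sucm m r) ** Ym p r) $ k $ j * dlt i l"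
| "qbr0 m (CX r i j) (CY s k l) p =
     dlt s r * (dlt k j * dlt i l + 1/2 * (Ym p r ** Xm p r) $ k $ j * dlt i l
                + 1/2 * dlt k j * (Xm p r ** Ym p r) $ i $ l)
   - 1/2 * dlt s (predm m r) * Xm p r $ k $ j * Ym p (predm m r) $ i $ l
   + 1/2 * dlt s (sucm m r) * Ym p (sucm m r) $ k $ j * Xm p r $ i $ l"
| "qbr0 m (CX r i j) (CW s a k) p =
     1/2 * dlt s (sucm m r) * dlt k j * (Xm p r *v Wv p (sucm m r) a) $ i
   - 1/2 * dlt r s * Xm p r $ k $ j * Wv p r a $ i"
| "qbr0 m (CX r i j) (CV s a l) p =
     1/2 * dlt r s * (Vv p r a v* Xm p r) $ j * dlt i l
   - 1/2 * dlt s (sucm m r) * Vv p (sucm m r) a $ j * Xm p r $ i $ l"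
| "qbr0 m (CY r i j) (CW s a k) p =
     1/2 * dlt r s * dlt k j * (Ym p r *v Wv p r a) $ i
   - 1/2 * dlt s (sucm m r) * Ym p r $ k $ j * Wv p (sucm m r) a $ i"
| "qbr0 m (CY r i j) (CV s a l) p =
     1/2 * dlt s (sucm m r) * (Vv p (sucm m r) a v* Ym p r) $ j * dlt i l
   - 1/2 * dlt r s * Vv p r a $ j * Ym p r $ i $ l"
| "qbr0 m (CV s a j) (CV r b l) p =
     - 1/2 * ord_sgn s r * Vv p s a $ j * Vv p r b $ l
     - 1/2 * dlt s r * ord_sgn a b * (Vv p r b $ j * Vv p s a $ l + Vv p s a $ j * Vv p r b $ l)"
| "qbr0 m (CW s a i) (CW r b k) p =
     - 1/2 * ord_sgn s r * Wv p r b $ k * Wv p s a $ i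
     - 1/2 * dlt s r * ord_sgn a b * (Wv p r b $ k * Wv p s a $ i + Wv p s a $ k * Wv p r b $ i)"
| "qbr0 m (CV s a j) (CW r b k) p =
     1/2 * ord_sgn s r * Wv p r b $ k * Vv p s a $ j
   + dlt s r * dlt a b * (dlt k j + 1/2 * Wv p r b $ k * Vv p s a $ j
                          + 1/2 * dlt k j * rowcol (Vv p s a) (Wv p r b))
   + 1/2 * dlt s r * ord_sgn a b * (dlt k j * rowcol (Vv p s a) (Wv p r b) + Wv p r b $ k * Vv p s a $ j)"
| "qbr0 m _ _ p = 0"

definition qbr :: "nat \<Rightarrow> ('n::finite) coord \<Rightarrow> 'n coord \<Rightarrow> 'n point \<Rightarrow> complex" where
  "qbr m c e p = (if crank c \<le> crank e then qbr0 m c e p else - qbr0 m e c p)"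

definition pderiv_coord :: "('n point \<Rightarrow> complex) \<Rightarrow> 'n point \<Rightarrow> 'n coord \<Rightarrow> complex" where
  "pderiv_coord F p c = deriv (\<lambda>z. F (p(c := z))) (p c)"

definition ham :: "nat \<Rightarrow> (nat \<Rightarrow> nat) \<Rightarrow> (('n::finite) point \<Rightarrow> complex) \<Rightarrow> 'n coord \<Rightarrow> 'n point \<Rightarrow> complex" where
  "ham m d F g p = (\<Sum>c\<in>coords m d. pderiv_coord F p c * qbr m c g p)"

definition Hk :: "nat \<Rightarrow> nat \<Rightarrow> ('n::finite) point \<Rightarrow> complex" where
  "Hk m k p = (1 / of_nat k) * btrace m (bpow m (Zbig m p) k)"

end

theory Submission
  imports Defs
begin

text \<open>Write \<open>P\<^sub>a\<close> for the \<open>a\<close>-th diagonal block of \<open>Z\<^sup>k\<close> and \<open>G\<^sub>r\<close> for the \<open>(r, r+1)\<close> block of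
  \<open>Z\<^sup>k\<^sup>-\<^sup>1\<close>. The Hamiltonian depends on \<open>Y\<^sub>r\<close> and \<open>X\<^sub>r\<close> only through \<open>Z\<^sub>r = Y\<^sub>r + X\<^sub>r\<^sup>-\<^sup>1\<close>, so
  its partial derivatives are \<open>G\<^sub>r\<close> and \<open>-X\<^sub>r\<^sup>-\<^sup>1 G\<^sub>r X\<^sub>r\<^sup>-\<^sup>1\<close>. Inserting them into the bracket,
  the intertwining relations \<open>G\<^sub>s\<^sub>+\<^sub>1 Z\<^sub>s\<^sub>+\<^sub>1 = Z\<^sub>s G\<^sub>s\<close> make almost everything cancel: the vector
  field is \<open>X\<^sub>s' = -X\<^sub>s P\<^sub>s\<^sub>+\<^sub>1\<close>, \<open>Y\<^sub>s' = -P\<^sub>s\<^sub>+\<^sub>1 X\<^sub>s\<^sup>-\<^sup>1\<close>, \<open>V' = W' = 0\<close>. Along it \<open>Z\<close> is constant,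
  so the flow is \<open>X\<^sub>s(t) = X\<^sub>s(0) exp (-t P\<^sub>s\<^sub>+\<^sub>1)\<close>; since \<open>Z\<close> shifts blocks cyclically and
  \<open>m\<close> divides \<open>k\<close>, \<open>Z\<^sup>k\<close> is block diagonal and this is \<open>X(0) exp (-t Z(0)\<^sup>k)\<close>.\<close>

lemma matrix_mult_entry: "(A ** B) $ i $ j = (\<Sum>l\<in>UNIV. A $ i $ l * B $ l $ j)"
  by (simp add: matrix_matrix_mult_def)

lemma sum_matrix_mult: "(\<Sum>x\<in>S. F x) ** (C::'a::comm_semiring_1^'n^'m) = (\<Sum>x\<in>S. F x ** C)"
  by (simp add: vec_eq_iff matrix_mult_entry sum_distrib_right) (subst sum.swap, simp)

lemma matrix_mult_sum: "(C::'a::comm_semiring_1^'n^'m) ** (\<Sum>x\<in>S. F x) = (\<Sum>x\<in>S. C ** F x)"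
  by (simp add: vec_eq_iff matrix_mult_entry sum_distrib_left) (subst sum.swap, simp)

lemma matrix_add_rdistrib: "(A + B) ** C = A ** C + B ** (C::'a::comm_semiring_1^'n^'m)"
  by (simp add: vec_eq_iff matrix_mult_entry sum.distrib distrib_right)

lemma matrix_diff_ldistrib: "A ** (B - C) = A ** B - A ** (C::'a::comm_ring_1^'n^'m)"
  by (simp add: vec_eq_iff matrix_mult_entry right_diff_distrib sum_subtractf)

lemma matrix_diff_rdistrib: "(A - B) ** C = A ** C - B ** (C::'a::comm_ring_1^'n^'m)"
  by (simp add: vec_eq_iff matrix_mult_entry left_diff_distrib sum_subtractf)

lemma matrix_mult_minus_left: "(- A) ** B = - (A ** B :: 'a::comm_ring_1^'n^'m)"
  by (simp add: vec_eq_iff matrix_mult_entry sum_negf)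

lemma matrix_mult_minus_right: "A ** (- B) = - (A ** B :: 'a::comm_ring_1^'n^'m)"
  by (simp add: vec_eq_iff matrix_mult_entry sum_negf)

lemma vector_matrix_mult_minus: "v v* (- A) = - (v v* A :: 'a::comm_ring_1^'n)"
  by (simp add: vec_eq_iff vector_matrix_mult_def sum_negf)

lemma matrix_vector_mult_minus: "(- A) *v w = - (A *v w :: 'a::comm_ring_1^'n)"
  by (simp add: vec_eq_iff matrix_vector_mult_def sum_negf)

lemma matrix_mult_cancel_right: "A ** B = mat 1 \<Longrightarrow> M ** A ** B = (M::'a::comm_semiring_1^'n^'m)"
  by (metis matrix_mul_assoc matrix_mul_rid)

lemma trace_sum: "trace (\<Sum>x\<in>S. F x) = (\<Sum>x\<in>S. trace (F x :: 'a::comm_semiring_1^'n^'n))"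
  by (simp add: trace_def) (subst sum.swap, simp)

lemma trace_mult_elementary:
  "trace (G ** (\<chi> x y. if x = i \<and> y = j then 1 else 0)) = (G $ j $ i :: 'a::comm_semiring_1)"
proof -
  have "trace (G ** (\<chi> x y. if x = i \<and> y = j then 1 else 0)) = (\<Sum>x\<in>UNIV. if x = j then G $ x $ i else 0)"
    unfolding trace_def matrix_mult_entry
    by (intro sum.cong refl) (simp add: if_distrib[of "\<lambda>v. _ * v"] cong: if_cong)
  then show ?thesis by simp
qed

lemma trace_mult_rank_one:
  "trace (G ** (\<chi> x y. - (B $ x $ i * B $ j $ y))) = - (B ** G ** B) $ j $ (i::'n::finite)"
  for G B :: "'a::comm_ring_1^'n^'n"
proof -
  have "trace (G ** (\<chi> x y. - (B $ x $ i * B $ j $ y)))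
      = - (\<Sum>x\<in>UNIV. \<Sum>l\<in>UNIV. B $ j $ x * G $ x $ l * B $ l $ i)"
    unfolding trace_def matrix_mult_entry by (simp add: sum_negf mult_ac)
  also have "\<dots> = - (B ** G ** B) $ j $ i"
    by (simp add: matrix_mult_entry sum_distrib_left sum_distrib_right mult_ac) (rule sum.swap)
  finally show ?thesis .
qed

lemma matrix_inv_right: "invertible A \<Longrightarrow> A ** matrix_inv A = mat 1"
  and matrix_inv_left: "invertible A \<Longrightarrow> matrix_inv A ** A = mat 1"
  for A :: "'a::semiring_1^'n^'n"
proof -
  assume "invertible A"
  then have "\<exists>A'. A ** A' = mat 1 \<and> A' ** A = mat 1" by (simp add: invertible_def)
  then have "A ** matrix_inv A = mat 1 \<and> matrix_inv A ** A = mat 1"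
    unfolding matrix_inv_def by (rule someI_ex)
  then show "A ** matrix_inv A = mat 1" "matrix_inv A ** A = mat 1" by auto
qed

lemma matrix_inv_unique:
  fixes A N :: "'a::field^'n^'n"
  assumes "A ** N = mat 1"
  shows "matrix_inv A = N"
proof -
  have NA: "N ** A = mat 1" using assms matrix_left_right_inverse by blast
  then have inv: "invertible A" unfolding invertible_def using assms by blast
  have "matrix_inv A = (N ** A) ** matrix_inv A" by (simp add: NA)
  also have "\<dots> = N" by (simp add: matrix_mul_assoc[symmetric] matrix_inv_right[OF inv])
  finally show ?thesis .
qed

text \<open>Sherman--Morrison formula for a change of a single entry.\<close>
lemma matrix_inv_update_entry:
  fixes A :: "'a::field^'n^'n"
  assumes inv: "invertible A" and nz: "1 + w * matrix_inv A $ j $ i \<noteq> 0"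
  shows "matrix_inv (\<chi> x y. if x = i \<and> y = j then A $ i $ j + w else A $ x $ y) =
    (\<chi> a b. matrix_inv A $ a $ b
        - w / (1 + w * matrix_inv A $ j $ i) * (matrix_inv A $ a $ i * matrix_inv A $ j $ b))"
proof (rule matrix_inv_unique)
  define B where "B = matrix_inv A"
  define c where "c = w / (1 + w * B $ j $ i)"
  have cw: "w - c * w * B $ j $ i = c"
    using nz by (simp add: c_def B_def field_simps)
  have AB: "(\<Sum>l\<in>UNIV. A $ a $ l * B $ l $ b) = (if a = b then 1 else 0)" for a b
    using arg_cong[OF matrix_inv_right[OF inv], of "\<lambda>M. M $ a $ b"]
    by (simp add: matrix_mult_entry B_def mat_def)
  have row: "(\<Sum>l\<in>UNIV. (if x = i \<and> l = j then A $ i $ j + w else A $ x $ l) * X l)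
      = (\<Sum>l\<in>UNIV. A $ x $ l * X l) + (if x = i then w * X j else 0)" for x and X :: "'n \<Rightarrow> 'a"
  proof -
    have "(\<Sum>l\<in>UNIV. (if x = i \<and> l = j then A $ i $ j + w else A $ x $ l) * X l)
        = (\<Sum>l\<in>UNIV. A $ x $ l * X l + (if l = j then (if x = i then w * X j else 0) else 0))"
      by (rule sum.cong) (auto simp: distrib_right)
    then show ?thesis by (simp add: sum.distrib)
  qed
  have col: "(\<Sum>l\<in>UNIV. A $ x $ l * (B $ l $ b - c * (B $ l $ i * B $ j $ b)))
      = (\<Sum>l\<in>UNIV. A $ x $ l * B $ l $ b) - c * (\<Sum>l\<in>UNIV. A $ x $ l * B $ l $ i) * B $ j $ b" for x b
    by (simp add: right_diff_distrib sum_subtractf sum_distrib_left sum_distrib_right mult_ac)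
  have "w * (B $ j $ b - c * (B $ j $ i * B $ j $ b)) = (w - c * w * B $ j $ i) * B $ j $ b" for b
    by (simp add: algebra_simps)
  then have "w * (B $ j $ b - c * (B $ j $ i * B $ j $ b)) = c * B $ j $ b" for b
    by (simp only: cw)
  then show "(\<chi> x y. if x = i \<and> y = j then A $ i $ j + w else A $ x $ y) **
      (\<chi> a b. matrix_inv A $ a $ b - w / (1 + w * matrix_inv A $ j $ i) * (matrix_inv A $ a $ i * matrix_inv A $ j $ b))
      = mat 1"
    unfolding B_def[symmetric] c_def[symmetric] vec_eq_iff matrix_mult_entry vec_lambda_beta row col AB
    by (simp add: mat_def)
qed

section \<open>Matrix powers and the matrix exponential\<close>

definition mpow :: "'a::semiring_1^'n^'n \<Rightarrow> nat \<Rightarrow> 'a^'n^'n" where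
  "mpow A j = (((**) A) ^^ j) (mat 1)"

lemma mpow_0 [simp]: "mpow A 0 = mat 1"
  by (simp add: mpow_def)

lemma mpow_Suc: "mpow A (Suc j) = A ** mpow A j"
  by (simp add: mpow_def)

lemma mpow_Suc_right: "mpow A (Suc j) = mpow A j ** A"
  by (induction j) (simp_all add: mpow_Suc matrix_mul_assoc)

lemma mpow_commute: "A ** mpow A j = mpow A j ** A"
  by (metis mpow_Suc mpow_Suc_right)

lemma mpow_scaleR: "mpow (c *\<^sub>R A) j = (c ^ j) *\<^sub>R mpow A j" for A :: "complex^'n^'n"
  by (induction j) (simp_all add: mpow_Suc matrix_scalar_ac scalar_matrix_assoc[symmetric])

text \<open>Submultiplicativity of the entrywise \<open>\<ell>\<^sup>1\<close> norm bounds the entries of \<open>A\<^sup>j\<close>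
  geometrically, which gives convergence of the exponential series.\<close>
definition norm1 :: "complex^'n^'n \<Rightarrow> real" where
  "norm1 M = (\<Sum>i\<in>UNIV. \<Sum>j\<in>UNIV. cmod (M $ i $ j))"

lemma norm1_nonneg: "0 \<le> norm1 M"
  unfolding norm1_def by (simp add: sum_nonneg)

lemma norm_entry_le_norm1: "cmod (M $ i $ j) \<le> norm1 M"
proof -
  have "cmod (M $ i $ j) \<le> (\<Sum>j\<in>UNIV. cmod (M $ i $ j))"
    by (rule member_le_sum) auto
  also have "\<dots> \<le> norm1 M"
    unfolding norm1_def by (rule member_le_sum) (auto intro: sum_nonneg)
  finally show ?thesis .
qed

lemma norm1_mult: "norm1 (A ** B) \<le> norm1 A * norm1 B"
proof -
  have "norm1 (A ** B) \<le> (\<Sum>i\<in>UNIV. \<Sum>j\<in>UNIV. \<Sum>l\<in>UNIV. cmod (A$i$l) * cmod (B$l$j))"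
    unfolding norm1_def matrix_mult_entry
    by (intro sum_mono order.trans[OF norm_sum]) (simp add: norm_mult)
  also have "\<dots> = (\<Sum>i\<in>UNIV. \<Sum>l\<in>UNIV. cmod (A$i$l) * (\<Sum>j\<in>UNIV. cmod (B$l$j)))"
    by (simp add: sum_distrib_left, subst sum.swap, simp)
  also have "\<dots> \<le> (\<Sum>i\<in>UNIV. \<Sum>l\<in>UNIV. cmod (A$i$l) * norm1 B)"
  proof (intro sum_mono mult_left_mono)
    fix l show "(\<Sum>j\<in>UNIV. cmod (B$l$j)) \<le> norm1 B"
      unfolding norm1_def by (rule member_le_sum) (auto intro: sum_nonneg)
  qed auto
  also have "\<dots> = norm1 A * norm1 B"
    by (simp add: norm1_def sum_distrib_right)
  finally show ?thesis .
qed

lemma norm1_mpow: "norm1 (mpow A j :: complex^'n^'n) \<le> real CARD('n) * norm1 A ^ j"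
proof (induction j)
  case 0
  have "norm1 (mat 1 :: complex^'n^'n) = (\<Sum>i\<in>(UNIV::'n set). 1)"
    unfolding norm1_def by (intro sum.cong refl) (simp add: mat_def if_distrib[of cmod] cong: if_cong)
  then show ?case by simp
next
  case (Suc j)
  have "norm1 (mpow A (Suc j)) \<le> norm1 A * norm1 (mpow A j)"
    unfolding mpow_Suc by (rule norm1_mult)
  also have "\<dots> \<le> norm1 A * (real CARD('n) * norm1 A ^ j)"
    by (rule mult_left_mono[OF Suc.IH norm1_nonneg])
  finally show ?case by (simp add: algebra_simps)
qed

definition mexp :: "complex^'n^'n \<Rightarrow> real \<Rightarrow> complex^'n^'n" where
  "mexp A t = (\<Sum>j. (1 / fact j) *\<^sub>R (t ^ j *\<^sub>R mpow A j))"

definition mexp_coeff :: "complex^'n^'n \<Rightarrow> 'n \<Rightarrow> 'n \<Rightarrow> nat \<Rightarrow> complex" where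
  "mexp_coeff A a b j = mpow A j $ a $ b / of_real (fact j)"

lemma summable_mexp_coeff:
  fixes A :: "complex^'n^'n"
  shows "summable (\<lambda>j. mexp_coeff A a b j * u ^ j)"
proof (rule summable_comparison_test')
  show "summable (\<lambda>j. real CARD('n) * (inverse (fact j) * (norm1 A * cmod u) ^ j))"
    by (intro summable_mult summable_exp)
  fix j :: nat
  have "norm (mexp_coeff A a b j * u ^ j) = cmod (mpow A j $ a $ b) / fact j * cmod u ^ j"
    by (simp add: mexp_coeff_def norm_mult norm_divide norm_power)
  also have "\<dots> \<le> (real CARD('n) * norm1 A ^ j) / fact j * cmod u ^ j"
    by (intro mult_right_mono divide_right_mono order.trans[OF norm_entry_le_norm1 norm1_mpow]) auto
  also have "\<dots> = real CARD('n) * (inverse (fact j) * (norm1 A * cmod u) ^ j)"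
    by (simp add: field_simps)
  finally show "norm (mexp_coeff A a b j * u ^ j) \<le> \<dots>" .
qed

lemma sums_matrixI:
  fixes v :: "nat \<Rightarrow> 'a::real_normed_vector^'n^'m"
  assumes "\<And>a b. (\<lambda>j. v j $ a $ b) sums s a b"
  shows "v sums (\<chi> a b. s a b)"
  unfolding sums_def
proof (intro vec_tendstoI)
  fix a b
  show "((\<lambda>n. (\<Sum>j<n. v j) $ a $ b) \<longlongrightarrow> (\<chi> a b. s a b) $ a $ b) sequentially"
    using assms[of a b] by (simp add: sums_def)
qed

lemma mexp_entry: "mexp A t $ a $ b = (\<Sum>j. mexp_coeff A a b j * of_real t ^ j)"
proof -
  have "((1 / fact j) *\<^sub>R (t ^ j *\<^sub>R mpow A j)) $ a' $ b' = mexp_coeff A a' b' j * of_real t ^ j"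
    for j a' b'
    by (simp only: vector_scaleR_component) (simp add: mexp_coeff_def scaleR_conv_of_real field_simps)
  then have "(\<lambda>j. (1 / fact j) *\<^sub>R (t ^ j *\<^sub>R mpow A j)) sums (\<chi> a b. \<Sum>j. mexp_coeff A a b j * of_real t ^ j)"
    by (intro sums_matrixI) (simp add: summable_sums summable_mexp_coeff)
  then show ?thesis
    unfolding mexp_def by (simp add: sums_iff)
qed

lemma mexp_0 [simp]: "mexp A 0 = mat 1"
  by (simp add: vec_eq_iff mexp_entry) (simp add: mexp_coeff_def)

lemma mexp_mult_entry:
  "(mexp A t ** M) $ a $ b = (\<Sum>j. (mpow A j ** M) $ a $ b / of_real (fact j) * of_real t ^ j)"
  "(M ** mexp A t) $ a $ b = (\<Sum>j. (M ** mpow A j) $ a $ b / of_real (fact j) * of_real t ^ j)"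
proof -
  have "(mexp A t ** M) $ a $ b = (\<Sum>l\<in>UNIV. \<Sum>j. mexp_coeff A a l j * of_real t ^ j * M $ l $ b)"
    by (simp add: matrix_mult_entry mexp_entry suminf_mult2 summable_mexp_coeff)
  also have "\<dots> = (\<Sum>j. \<Sum>l\<in>UNIV. mexp_coeff A a l j * of_real t ^ j * M $ l $ b)"
    by (rule suminf_sum[symmetric]) (intro summable_mult2 summable_mexp_coeff)
  also have "\<dots> = (\<Sum>j. (mpow A j ** M) $ a $ b / of_real (fact j) * of_real t ^ j)"
    by (intro suminf_cong)
      (simp add: mexp_coeff_def matrix_mult_entry sum_distrib_left sum_divide_distrib field_simps)
  finally show "(mexp A t ** M) $ a $ b = (\<Sum>j. (mpow A j ** M) $ a $ b / of_real (fact j) * of_real t ^ j)" .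
  have "(M ** mexp A t) $ a $ b = (\<Sum>l\<in>UNIV. \<Sum>j. M $ a $ l * (mexp_coeff A l b j * of_real t ^ j))"
    by (simp add: matrix_mult_entry mexp_entry suminf_mult summable_mexp_coeff)
  also have "\<dots> = (\<Sum>j. \<Sum>l\<in>UNIV. M $ a $ l * (mexp_coeff A l b j * of_real t ^ j))"
    by (rule suminf_sum[symmetric]) (intro summable_mult summable_mexp_coeff)
  also have "\<dots> = (\<Sum>j. (M ** mpow A j) $ a $ b / of_real (fact j) * of_real t ^ j)"
    by (intro suminf_cong)
      (simp add: mexp_coeff_def matrix_mult_entry sum_distrib_left sum_divide_distrib field_simps)
  finally show "(M ** mexp A t) $ a $ b = (\<Sum>j. (M ** mpow A j) $ a $ b / of_real (fact j) * of_real t ^ j)" .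
qed

lemma mexp_commute: "mexp A t ** A = A ** mexp A t"
  by (simp add: vec_eq_iff mexp_mult_entry mpow_commute)

lemma has_vector_derivative_mexp:
  "((\<lambda>t. mexp A t $ a $ b) has_vector_derivative (mexp A t ** A) $ a $ b) (at t)"
proof -
  have "((\<lambda>u. \<Sum>j. mexp_coeff A a b j * u ^ j) has_field_derivative
      (\<Sum>j. diffs (mexp_coeff A a b) j * u ^ j)) (at u)" for u
    by (rule termdiffs_strong_converges_everywhere) (rule summable_mexp_coeff)
  then have "((\<lambda>t. \<Sum>j. mexp_coeff A a b j * of_real t ^ j) has_vector_derivative
      (\<Sum>j. diffs (mexp_coeff A a b) j * of_real t ^ j)) (at t)"
    by (rule has_vector_derivative_real_field)
  moreover have "(\<Sum>j. diffs (mexp_coeff A a b) j * of_real t ^ j) = (mexp A t ** A) $ a $ b"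
    unfolding mexp_mult_entry diffs_def mexp_coeff_def
    by (intro suminf_cong) (simp add: mpow_Suc_right del: of_nat_Suc)
  ultimately show ?thesis
    by (simp add: mexp_entry)
qed

lemma has_vector_derivative_mexp_neg:
  "((\<lambda>t. mexp A (-t) $ a $ b) has_vector_derivative - (mexp A (-t) ** A) $ a $ b) (at t)"
proof -
  have "(((\<lambda>t. mexp A t $ a $ b) \<circ> uminus) has_vector_derivative
      (- 1) *\<^sub>R (mexp A (-t) ** A) $ a $ b) (at t)"
    by (rule vector_diff_chain_at) (auto intro!: derivative_eq_intros has_vector_derivative_mexp)
  then show ?thesis by (simp add: o_def)
qed

text \<open>\<open>t \<mapsto> exp (t A) exp (-t A)\<close> has derivative zero because \<open>A\<close> commutes with \<open>exp (-t A)\<close>.\<close>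
lemma mexp_minus_right_inverse: "mexp A t ** mexp A (-t) = mat 1"
proof -
  have "\<exists>c. \<forall>t. (mexp A t ** mexp A (-t)) $ a $ b = c" for a b
  proof -
    have "((\<lambda>t. (mexp A t ** mexp A (-t)) $ a $ b) has_vector_derivative 0) (at t within UNIV)" for t
    proof -
      have D: "((\<lambda>t. \<Sum>l\<in>UNIV. mexp A t $ a $ l * mexp A (-t) $ l $ b) has_vector_derivative
          (\<Sum>l\<in>UNIV. mexp A t $ a $ l * - (mexp A (-t) ** A) $ l $ b
                      + (mexp A t ** A) $ a $ l * mexp A (-t) $ l $ b)) (at t)"
        by (intro has_vector_derivative_sum has_vector_derivative_mult
            has_vector_derivative_mexp has_vector_derivative_mexp_neg)
      have "(\<Sum>l\<in>UNIV. mexp A t $ a $ l * - (mexp A (-t) ** A) $ l $ b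
                      + (mexp A t ** A) $ a $ l * mexp A (-t) $ l $ b)
          = ((mexp A t ** A) ** mexp A (-t)) $ a $ b - (mexp A t ** (mexp A (-t) ** A)) $ a $ b"
        by (simp add: matrix_mult_entry[of _ _ _ b] sum.distrib sum_negf sum_subtractf)
      also have "\<dots> = 0"
        by (simp add: mexp_commute matrix_mul_assoc)
      finally have "((\<lambda>t. \<Sum>l\<in>UNIV. mexp A t $ a $ l * mexp A (-t) $ l $ b) has_vector_derivative 0) (at t)"
        using D by (simp only:)
      then show ?thesis
        by (simp only: matrix_mult_entry)
    qed
    then obtain c where "\<And>t. t \<in> UNIV \<Longrightarrow> (mexp A t ** mexp A (-t)) $ a $ b = c"
      by (rule has_vector_derivative_zero_constant[OF convex_UNIV]) blast
    then show ?thesis by blast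
  qed
  then have "(mexp A t ** mexp A (-t)) $ a $ b = (mexp A 0 ** mexp A (-0)) $ a $ b" for a b
    by metis
  then show ?thesis
    by (simp add: vec_eq_iff)
qed

lemma sum_lessThan_single:
  assumes "(s::nat) < m" and "\<And>c. c < m \<Longrightarrow> c \<noteq> s \<Longrightarrow> f c = 0"
  shows "(\<Sum>c<m. f c) = f s"
proof -
  have "(\<Sum>c<m. f c) = (\<Sum>c<m. if c = s then f s else 0)"
    by (rule sum.cong) (auto simp: assms(2))
  then show ?thesis using assms(1) by simp
qed

lemma bmul_assoc: "bmul m (bmul m A B) C = bmul m A (bmul m B C)"
  unfolding bmul_def
  by (simp add: sum_matrix_mult matrix_mult_sum matrix_mul_assoc) (subst sum.swap, simp)

lemma bmul_cong:
  "(\<And>c. c < m \<Longrightarrow> A a c = A' a c) \<Longrightarrow> (\<And>c. c < m \<Longrightarrow> B c b = B' c b)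
   \<Longrightarrow> bmul m A B a b = bmul m A' B' a b"
  unfolding bmul_def by (rule sum.cong) auto

lemma bmul_bid_left: "a < m \<Longrightarrow> bmul m (bid m) A a b = A a b"
  by (simp add: bmul_def bid_def if_distrib[where f="\<lambda>x. x ** _"] cong: if_cong)

lemma bmul_bid_right: "b < m \<Longrightarrow> bmul m A (bid m) a b = A a b"
  by (simp add: bmul_def bid_def if_distrib[where f="\<lambda>x. _ ** x"] cong: if_cong)

lemma bmul_sum_right: "bmul m A (\<lambda>a b. \<Sum>l\<in>S. F l a b) a b = (\<Sum>l\<in>S. bmul m A (F l) a b)"
  by (simp add: bmul_def matrix_mult_sum) (rule sum.swap)

lemma bpow_0 [simp]: "bpow m A 0 = bid m"
  by (simp add: bpow_def)

lemma bpow_Suc: "bpow m A (Suc j) = bmul m A (bpow m A j)"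
  by (simp add: bpow_def)

lemma bpow_add: "a < m \<Longrightarrow> bmul m (bpow m A i) (bpow m A j) a b = bpow m A (i + j) a b"
proof (induction i arbitrary: a)
  case 0
  then show ?case by (simp add: bmul_bid_left)
next
  case (Suc i)
  have "bmul m (bpow m A (Suc i)) (bpow m A j) a b = bmul m A (bmul m (bpow m A i) (bpow m A j)) a b"
    by (simp add: bpow_Suc bmul_assoc)
  also have "\<dots> = bmul m A (bpow m A (i + j)) a b"
    by (rule bmul_cong) (auto simp: Suc.IH)
  finally show ?case by (simp add: bpow_Suc)
qed

lemma bpow_Suc_right: "a < m \<Longrightarrow> b < m \<Longrightarrow> bpow m A (Suc j) a b = bmul m (bpow m A j) A a b"
proof -
  assume a: "a < m" and b: "b < m"
  have "bpow m A (Suc j) a b = bmul m (bpow m A j) (bpow m A 1) a b"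
    using bpow_add[OF a, of A j 1] by simp
  also have "\<dots> = bmul m (bpow m A j) A a b"
    by (rule bmul_cong) (auto simp: bpow_Suc bmul_bid_right b)
  finally show ?thesis .
qed

lemma bpow_cong:
  "(\<And>a b. a < m \<Longrightarrow> b < m \<Longrightarrow> A a b = A' a b) \<Longrightarrow> a < m \<Longrightarrow> b < m
   \<Longrightarrow> bpow m A j a b = bpow m A' j a b"
proof (induction j arbitrary: a b)
  case 0
  then show ?case by simp
next
  case (Suc j)
  show ?case
    unfolding bpow_Suc by (rule bmul_cong) (simp_all add: Suc.prems Suc.IH)
qed

lemma bpow_block_diagonal:
  assumes D: "\<And>a b. a < m \<Longrightarrow> b < m \<Longrightarrow> a \<noteq> b \<Longrightarrow> D a b = 0"
  shows "a < m \<Longrightarrow> b < m \<Longrightarrow> bpow m D j a b = (if a = b then mpow (D a a) j else 0)"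
proof (induction j arbitrary: a b)
  case 0
  then show ?case by (simp add: bid_def)
next
  case (Suc j)
  have "bpow m D (Suc j) a b = (\<Sum>c<m. D a c ** bpow m D j c b)"
    by (simp add: bpow_Suc bmul_def)
  also have "\<dots> = D a a ** bpow m D j a b"
    by (rule sum_lessThan_single[OF Suc.prems(1)]) (simp add: D Suc.prems)
  finally show ?case using Suc by (simp add: mpow_Suc)
qed

lemma btrace_cong: "(\<And>a. a < m \<Longrightarrow> A a a = A' a a) \<Longrightarrow> btrace m A = btrace m A'"
  unfolding btrace_def by (rule sum.cong) auto

lemma btrace_sum: "btrace m (\<lambda>a b. \<Sum>l\<in>S. F l a b) = (\<Sum>l\<in>S. btrace m (F l))"
  by (simp add: btrace_def trace_sum) (rule sum.swap)

lemma btrace_bmul_commute: "btrace m (bmul m A B) = btrace m (bmul m B A)"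
  unfolding btrace_def bmul_def trace_sum
  by (subst sum.swap) (intro sum.cong refl trace_mul_sym)

lemma sucm_less: "0 < m \<Longrightarrow> sucm m r < m"
  by (simp add: sucm_def)

lemma predm_less: "0 < m \<Longrightarrow> predm m r < m"
  by (simp add: predm_def)

lemma predm_sucm: "r < m \<Longrightarrow> predm m (sucm m r) = r"
  by (cases "Suc r = m") (simp_all add: sucm_def predm_def)

lemma sucm_predm: "r < m \<Longrightarrow> sucm m (predm m r) = r"
  by (cases r) (simp_all add: sucm_def predm_def)

lemma sucm_eq_iff: "r < m \<Longrightarrow> s < m \<Longrightarrow> sucm m r = sucm m s \<longleftrightarrow> r = s"
  by (metis predm_sucm)

lemma eq_predm_iff: "r < m \<Longrightarrow> s < m \<Longrightarrow> s = predm m r \<longleftrightarrow> r = sucm m s"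
  by (metis predm_sucm sucm_predm)

lemma eq_sucm_iff: "r < m \<Longrightarrow> s < m \<Longrightarrow> s = sucm m r \<longleftrightarrow> r = predm m s"
  by (metis predm_sucm sucm_predm)

text \<open>\<open>Z\<close> maps the \<open>b\<close>-th block to the \<open>(b+1)\<close>-th one, so \<open>Z\<^sup>j\<close> is supported on the
  blocks \<open>(b + j, b)\<close>.\<close>
lemma bpow_Zbig_eq_0:
  "0 < m \<Longrightarrow> a < m \<Longrightarrow> b < m \<Longrightarrow> a \<noteq> (b + j) mod m \<Longrightarrow> bpow m (Zbig m p) j a b = 0"
proof (induction j arbitrary: a)
  case 0
  then show ?case by (simp add: bid_def)
next
  case (Suc j)
  have "Zbig m p a c ** bpow m (Zbig m p) j c b = 0" if c: "c < m" for c
  proof (cases "a = sucm m c")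
    case True
    have "c \<noteq> (b + j) mod m"
    proof
      assume "c = (b + j) mod m"
      then have "a = (b + Suc j) mod m"
        using True by (simp add: sucm_def mod_Suc_eq)
      then show False using Suc.prems by simp
    qed
    then show ?thesis using Suc.IH[of c] Suc.prems c by simp
  qed (simp add: Zbig_def)
  then show ?case by (simp add: bpow_Suc bmul_def)
qed

lemma bpow_Zbig_block_diagonal:
  assumes "0 < m" "m dvd k" "a < m" "b < m" "a \<noteq> b"
  shows "bpow m (Zbig m p) k a b = 0"
proof (rule bpow_Zbig_eq_0)
  have "(b + k) mod m = b"
    using assms by (simp add: mod_add_right_eq[symmetric])
  then show "a \<noteq> (b + k) mod m" using assms by simp
qed (use assms in auto)

definition zdiag :: "nat \<Rightarrow> nat \<Rightarrow> ('n::finite) point \<Rightarrow> nat \<Rightarrow> complex^'n^'n" where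
  "zdiag m k p a = bpow m (Zbig m p) k a a"

definition zsuper :: "nat \<Rightarrow> nat \<Rightarrow> ('n::finite) point \<Rightarrow> nat \<Rightarrow> complex^'n^'n" where
  "zsuper m q p a = bpow m (Zbig m p) q a (sucm m a)"

lemma zdiag_Suc_sucm: "0 < m \<Longrightarrow> s < m \<Longrightarrow> zdiag m (Suc q) p (sucm m s) = Zs p s ** zsuper m q p s"
proof -
  assume m: "0 < m" and s: "s < m"
  have "zdiag m (Suc q) p (sucm m s)
      = (\<Sum>c<m. Zbig m p (sucm m s) c ** bpow m (Zbig m p) q c (sucm m s))"
    by (simp add: zdiag_def bpow_Suc bmul_def)
  also have "\<dots> = Zbig m p (sucm m s) s ** bpow m (Zbig m p) q s (sucm m s)"
    by (rule sum_lessThan_single[OF s]) (simp add: Zbig_def sucm_eq_iff s)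
  finally show ?thesis by (simp add: Zbig_def zsuper_def)
qed

lemma zdiag_Suc: "0 < m \<Longrightarrow> s < m \<Longrightarrow> zdiag m (Suc q) p s = zsuper m q p s ** Zs p s"
proof -
  assume m: "0 < m" and s: "s < m"
  have "zdiag m (Suc q) p s = (\<Sum>c<m. bpow m (Zbig m p) q s c ** Zbig m p c s)"
    by (simp add: zdiag_def bpow_Suc_right[OF s s] bmul_def)
  also have "\<dots> = bpow m (Zbig m p) q s (sucm m s) ** Zbig m p (sucm m s) s"
    by (rule sum_lessThan_single[OF sucm_less[OF m]]) (simp add: Zbig_def)
  finally show ?thesis by (simp add: Zbig_def zsuper_def)
qed

text \<open>Intertwining relations \<open>G\<^sub>s\<^sub>+\<^sub>1 Z\<^sub>s\<^sub>+\<^sub>1 = Z\<^sub>s G\<^sub>s\<close> for the superdiagonal blocks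
  \<open>G = Z\<^sup>k\<^sup>-\<^sup>1\<close>, both sides being the diagonal block of \<open>Z\<^sup>k\<close> at \<open>s + 1\<close>.\<close>
lemma zsuper_intertwine_sucm:
  "0 < m \<Longrightarrow> s < m \<Longrightarrow> zsuper m q p (sucm m s) ** Zs p (sucm m s) = Zs p s ** zsuper m q p s"
  using zdiag_Suc[of m "sucm m s" q p] zdiag_Suc_sucm[of m s q p] by (simp add: sucm_less)

lemma zsuper_intertwine_predm:
  "0 < m \<Longrightarrow> s < m \<Longrightarrow> Zs p (predm m s) ** zsuper m q p (predm m s) = zsuper m q p s ** Zs p s"
  using zdiag_Suc[of m s q p] zdiag_Suc_sucm[of m "predm m s" q p] by (simp add: predm_less sucm_predm)

section \<open>Partial derivatives of \<open>tr (Z\<^sup>k) / k\<close>\<close>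

definition bpow_derivative :: "nat \<Rightarrow> ('n::finite) bmat \<Rightarrow> 'n bmat \<Rightarrow> nat \<Rightarrow> 'n bmat" where
  "bpow_derivative m B B' j =
     (\<lambda>a b. \<Sum>l<j. bmul m (bpow m B l) (bmul m B' (bpow m B (j - 1 - l))) a b)"

lemma bpow_derivative_Suc:
  "a < m \<Longrightarrow> bpow_derivative m B B' (Suc j) a b
     = bmul m B' (bpow m B j) a b + bmul m B (bpow_derivative m B B' j) a b"
proof -
  assume a: "a < m"
  have "bpow_derivative m B B' (Suc j) a b = bmul m (bpow m B 0) (bmul m B' (bpow m B j)) a b
     + (\<Sum>l<j. bmul m (bpow m B (Suc l)) (bmul m B' (bpow m B (j - 1 - l))) a b)"
    unfolding bpow_derivative_def by (subst sum.lessThan_Suc_shift) simp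
  also have "(\<Sum>l<j. bmul m (bpow m B (Suc l)) (bmul m B' (bpow m B (j - 1 - l))) a b)
      = bmul m B (bpow_derivative m B B' j) a b"
    by (simp add: bpow_derivative_def bmul_sum_right bpow_Suc bmul_assoc)
  finally show ?thesis using a by (simp add: bmul_bid_left)
qed

lemma has_field_derivative_bpow:
  assumes "\<And>a b i j. a < m \<Longrightarrow> b < m \<Longrightarrow>
    ((\<lambda>z. B z a b $ i $ j) has_field_derivative B' a b $ i $ j) (at z0)"
  shows "a < m \<Longrightarrow> b < m \<Longrightarrow>
    ((\<lambda>z. bpow m (B z) n a b $ i $ j) has_field_derivative bpow_derivative m (B z0) B' n a b $ i $ j) (at z0)"
proof (induction n arbitrary: a b i j)
  case 0
  then show ?case by (simp add: bpow_derivative_def)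
next
  case (Suc n)
  have "((\<lambda>z. \<Sum>c<m. \<Sum>l\<in>UNIV. B z a c $ i $ l * bpow m (B z) n c b $ l $ j) has_field_derivative
     (\<Sum>c<m. \<Sum>l\<in>UNIV. B' a c $ i $ l * bpow m (B z0) n c b $ l $ j
                       + bpow_derivative m (B z0) B' n c b $ l $ j * B z0 a c $ i $ l)) (at z0)"
    using Suc by (intro DERIV_sum DERIV_mult assms) auto
  moreover have "(\<Sum>c<m. \<Sum>l\<in>UNIV. B' a c $ i $ l * bpow m (B z0) n c b $ l $ j
                       + bpow_derivative m (B z0) B' n c b $ l $ j * B z0 a c $ i $ l)
      = bpow_derivative m (B z0) B' (Suc n) a b $ i $ j"
    using Suc.prems
    by (simp add: bpow_derivative_Suc bmul_def matrix_mult_entry sum.distrib mult.commute)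
  ultimately show ?case
    by (simp add: bpow_Suc bmul_def matrix_mult_entry)
qed

lemma btrace_bpow_derivative:
  "btrace m (bpow_derivative m B B' (Suc q)) = of_nat (Suc q) * btrace m (bmul m (bpow m B q) B')"
proof -
  have "btrace m (bmul m (bpow m B l) (bmul m B' (bpow m B (q - l)))) = btrace m (bmul m (bpow m B q) B')"
    if l: "l < Suc q" for l
  proof -
    have "btrace m (bmul m (bpow m B l) (bmul m B' (bpow m B (q - l))))
        = btrace m (bmul m B' (bmul m (bpow m B (q - l)) (bpow m B l)))"
      by (simp add: btrace_bmul_commute[of m "bpow m B l"] bmul_assoc)
    also have "\<dots> = btrace m (bmul m B' (bpow m B q))"
    proof (rule btrace_cong, rule bmul_cong)
      fix c assume "c < m"
      then show "bmul m (bpow m B (q - l)) (bpow m B l) c a = bpow m B q c a" for a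
        using l by (simp add: bpow_add)
    qed simp
    also have "\<dots> = btrace m (bmul m (bpow m B q) B')"
      by (rule btrace_bmul_commute)
    finally show ?thesis .
  qed
  then show ?thesis
    unfolding bpow_derivative_def btrace_sum by (simp del: sum.lessThan_Suc)
qed

lemma has_field_derivative_btrace_bpow:
  assumes "\<And>a b i j. a < m \<Longrightarrow> b < m \<Longrightarrow>
    ((\<lambda>z. B z a b $ i $ j) has_field_derivative B' a b $ i $ j) (at z0)"
  shows "((\<lambda>z. btrace m (bpow m (B z) (Suc q))) has_field_derivative
           of_nat (Suc q) * btrace m (bmul m (bpow m (B z0) q) B')) (at z0)"
proof -
  have "((\<lambda>z. \<Sum>a<m. \<Sum>i\<in>UNIV. bpow m (B z) (Suc q) a a $ i $ i) has_field_derivative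
      (\<Sum>a<m. \<Sum>i\<in>UNIV. bpow_derivative m (B z0) B' (Suc q) a a $ i $ i)) (at z0)"
    by (intro DERIV_sum has_field_derivative_bpow[OF assms]) auto
  then show ?thesis
    using btrace_bpow_derivative[of m "B z0" B' q] unfolding btrace_def trace_def by simp
qed

lemma btrace_bmul_single_block:
  assumes "r < m"
  shows "btrace m (bmul m A (\<lambda>a b. if a = sucm m b \<and> b = r then M else 0)) = trace (A r (sucm m r) ** M)"
proof -
  have m: "0 < m" using assms by simp
  have "(\<Sum>c<m. A a c ** (if c = sucm m a \<and> a = r then M else 0))
      = (if a = r then A r (sucm m r) ** M else 0)" if "a < m" for a
  proof (cases "a = r")
    case True
    then show ?thesis
      by (simp, subst sum_lessThan_single[OF sucm_less[OF m]]) auto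
  qed simp
  then have "btrace m (bmul m A (\<lambda>a b. if a = sucm m b \<and> b = r then M else 0))
      = (\<Sum>a<m. trace (if a = r then A r (sucm m r) ** M else 0))"
    unfolding btrace_def bmul_def by (intro sum.cong refl) simp
  also have "\<dots> = trace (A r (sucm m r) ** M)"
    by (subst sum_lessThan_single[OF assms]) (auto simp: trace_def)
  finally show ?thesis .
qed

lemma Xm_fun_upd: "(\<And>s i j. c \<noteq> CX s i j) \<Longrightarrow> Xm (p(c := z)) = Xm p"
  by (auto simp: Xm_def fun_eq_iff vec_eq_iff)

lemma Ym_fun_upd: "(\<And>s i j. c \<noteq> CY s i j) \<Longrightarrow> Ym (p(c := z)) = Ym p"
  by (auto simp: Ym_def fun_eq_iff vec_eq_iff)

lemma Zbig_fun_upd: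
  assumes "\<And>s i j. c \<noteq> CX s i j" and "\<And>s i j. c \<noteq> CY s i j"
  shows "Zbig m (p(c := z)) = Zbig m p"
  unfolding Zbig_def Zs_def Xm_fun_upd[OF assms(1)] Ym_fun_upd[OF assms(2)] ..

lemma pderiv_coord_Hk_const:
  assumes "\<And>s i j. c \<noteq> CX s i j" and "\<And>s i j. c \<noteq> CY s i j"
  shows "pderiv_coord (Hk m k) p c = 0"
  unfolding pderiv_coord_def Hk_def Zbig_fun_upd[OF assms] by simp

text \<open>A coordinate \<open>c\<close> that only enters the block \<open>Z\<^sub>r\<close>, through a differentiable \<open>F\<close>:
  by cyclicity of the trace, \<open>\<partial>\<^sub>c tr (Z\<^sup>q\<^sup>+\<^sup>1) / (q+1) = tr (Z\<^sup>q \<partial>\<^sub>cZ)\<close>.\<close>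
lemma pderiv_coord_Hk_block:
  assumes r: "r < m" and S: "open S" "p c \<in> S"
    and Z: "\<And>z. z \<in> S \<Longrightarrow>
      Zbig m (p(c := z)) = (\<lambda>a b. if a = sucm m b then if b = r then F z else Zs p b else 0)"
    and F: "\<And>x y. ((\<lambda>z. F z $ x $ y) has_field_derivative K $ x $ y) (at (p c))"
  shows "pderiv_coord (Hk m (Suc q)) p c = trace (zsuper m q p r ** K)"
proof -
  define Zt where "Zt z = (\<lambda>a b. if a = sucm m b then if b = r then F z else Zs p b else 0)" for z
  define Z' where "Z' = (\<lambda>a b. if a = sucm m b \<and> b = r then K else 0)"
  have "((\<lambda>z. Zt z a b $ x $ y) has_field_derivative Z' a b $ x $ y) (at (p c))" for a b x y
  proof (cases "a = sucm m b \<and> b = r")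
    case True
    then show ?thesis using F by (simp add: Zt_def Z'_def)
  next
    case False
    then have "(\<lambda>z. Zt z a b $ x $ y) = (\<lambda>z. Zt (p c) a b $ x $ y)" and "Z' a b = 0"
      by (auto simp: Zt_def Z'_def)
    then show ?thesis by simp
  qed
  then have "((\<lambda>z. 1 / of_nat (Suc q) * btrace m (bpow m (Zt z) (Suc q))) has_field_derivative
      1 / of_nat (Suc q) * (of_nat (Suc q) * btrace m (bmul m (bpow m (Zt (p c)) q) Z'))) (at (p c))"
    by (intro DERIV_cmult has_field_derivative_btrace_bpow)
  then have "((\<lambda>z. Hk m (Suc q) (p(c := z))) has_field_derivative
      1 / of_nat (Suc q) * (of_nat (Suc q) * btrace m (bmul m (bpow m (Zt (p c)) q) Z'))) (at (p c))"
    by (rule has_field_derivative_transform_within_open[OF _ S]) (simp add: Hk_def Z Zt_def)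
  then have "pderiv_coord (Hk m (Suc q)) p c
      = 1 / of_nat (Suc q) * (of_nat (Suc q) * btrace m (bmul m (bpow m (Zt (p c)) q) Z'))"
    unfolding pderiv_coord_def by (rule DERIV_imp_deriv)
  also have "\<dots> = btrace m (bmul m (bpow m (Zbig m p) q) Z')"
    using Z[OF S(2)] by (simp add: Zt_def del: of_nat_Suc)
  also have "\<dots> = trace (zsuper m q p r ** K)"
    unfolding Z'_def zsuper_def by (rule btrace_bmul_single_block[OF r])
  finally show ?thesis .
qed

lemma pderiv_coord_Hk_CY:
  assumes r: "r < m"
  shows "pderiv_coord (Hk m (Suc q)) p (CY r i j) = zsuper m q p r $ j $ i"
proof -
  define F where "F z = (\<chi> x y. if x = i \<and> y = j then z else Ym p r $ x $ y) + matrix_inv (Xm p r)" for z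
  have "pderiv_coord (Hk m (Suc q)) p (CY r i j)
      = trace (zsuper m q p r ** (\<chi> x y. if x = i \<and> y = j then 1 else 0))"
  proof (rule pderiv_coord_Hk_block[OF r open_UNIV UNIV_I])
    show "Zbig m (p(CY r i j := z)) = (\<lambda>a b. if a = sucm m b then if b = r then F z else Zs p b else 0)" for z
      by (intro ext) (auto simp: Zbig_def Zs_def F_def Xm_fun_upd Ym_def vec_eq_iff)
    show "((\<lambda>z. F z $ x $ y) has_field_derivative (\<chi> x y. if x = i \<and> y = j then 1 else 0) $ x $ y)
        (at (p (CY r i j)))" for x y
      by (auto simp: F_def intro!: derivative_eq_intros)
  qed
  then show ?thesis
    by (simp add: trace_mult_elementary)
qed

lemma pderiv_coord_Hk_CX:
  assumes r: "r < m" and inv: "invertible (Xm p r)"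
  shows "pderiv_coord (Hk m (Suc q)) p (CX r i j)
    = - (matrix_inv (Xm p r) ** zsuper m q p r ** matrix_inv (Xm p r)) $ j $ i"
proof -
  define B where "B = matrix_inv (Xm p r)"
  define z0 where "z0 = p (CX r i j)"
  define S where "S = {z. 1 + (z - z0) * B $ j $ i \<noteq> 0}"
  define F where "F z = Ym p r +
    (\<chi> a b. B $ a $ b - (z - z0) / (1 + (z - z0) * B $ j $ i) * (B $ a $ i * B $ j $ b))" for z
  have "open S"
    unfolding S_def by (rule open_Collect_neq; intro continuous_intros)
  moreover have "p (CX r i j) \<in> S"
    by (simp add: S_def z0_def)
  ultimately have "pderiv_coord (Hk m (Suc q)) p (CX r i j)
      = trace (zsuper m q p r ** (\<chi> x y. - (B $ x $ i * B $ j $ y)))"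
  proof (rule pderiv_coord_Hk_block[OF r])
    fix z assume "z \<in> S"
    have "Xm (p(CX r i j := z)) r = (\<chi> x y. if x = i \<and> y = j then Xm p r $ i $ j + (z - z0) else Xm p r $ x $ y)"
      by (simp add: Xm_def vec_eq_iff z0_def)
    then have "matrix_inv (Xm (p(CX r i j := z)) r) = F z - Ym p r"
      using matrix_inv_update_entry[OF inv, of "z - z0" j i] \<open>z \<in> S\<close> by (simp add: S_def F_def B_def)
    moreover have "Xm (p(CX r i j := z)) b = Xm p b" if "b \<noteq> r" for b
      using that by (simp add: Xm_def)
    ultimately show "Zbig m (p(CX r i j := z))
        = (\<lambda>a b. if a = sucm m b then if b = r then F z else Zs p b else 0)"
      by (intro ext) (simp add: Zbig_def Zs_def Ym_fun_upd)
  next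
    show "((\<lambda>z. F z $ x $ y) has_field_derivative (\<chi> x y. - (B $ x $ i * B $ j $ y)) $ x $ y)
        (at (p (CX r i j)))" for x y
      by (auto simp: F_def z0_def intro!: derivative_eq_intros)
  qed
  then show ?thesis
    by (simp add: trace_mult_rank_one B_def)
qed

section \<open>The Hamiltonian vector field of \<open>tr (Z\<^sup>k) / k\<close>\<close>

text \<open>\<open>qbr_trX m D g p\<close> is the bracket \<open>{\<Sum>\<^sub>r tr (D\<^sub>r X\<^sub>r), g}\<close> with \<open>D\<close> frozen at \<open>p\<close>;
  by the Leibniz rule the Hamiltonian vector field is a sum of two such terms.\<close>
definition qbr_trX :: "nat \<Rightarrow> (nat \<Rightarrow> complex^'n^'n) \<Rightarrow> ('n::finite) coord \<Rightarrow> 'n point \<Rightarrow> complex" where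
  "qbr_trX m D g p = (\<Sum>r<m. \<Sum>i\<in>UNIV. \<Sum>j\<in>UNIV. D r $ j $ i * qbr m (CX r i j) g p)"

definition qbr_trY :: "nat \<Rightarrow> (nat \<Rightarrow> complex^'n^'n) \<Rightarrow> ('n::finite) coord \<Rightarrow> 'n point \<Rightarrow> complex" where
  "qbr_trY m D g p = (\<Sum>r<m. \<Sum>i\<in>UNIV. \<Sum>j\<in>UNIV. D r $ j $ i * qbr m (CY r i j) g p)"

lemma sum_coord_triples:
  assumes "\<And>r i j r' i' j'. C r i j = C r' i' j' \<Longrightarrow> r = r' \<and> i = i' \<and> j = j'"
  shows "(\<Sum>c\<in>{C r i j | r i j. r < m}. f c) = (\<Sum>r<m. \<Sum>i\<in>UNIV. \<Sum>j\<in>(UNIV::'n::finite set). f (C r i j))"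
proof -
  have "{C r i j | r i j. r < m} = (\<lambda>(r, i, j). C r i j) ` ({..<m} \<times> UNIV \<times> (UNIV::'n set))"
    by (force simp: image_iff)
  moreover have "inj_on (\<lambda>(r, i, j). C r i j) ({..<m} \<times> UNIV \<times> (UNIV::'n set))"
    by (auto simp: inj_on_def dest: assms)
  ultimately have "(\<Sum>c\<in>{C r i j | r i j. r < m}. f c)
      = (\<Sum>x\<in>{..<m} \<times> UNIV \<times> (UNIV::'n set). f (case x of (r, i, j) \<Rightarrow> C r i j))"
    by (simp add: sum.reindex comp_def)
  also have "\<dots> = (\<Sum>r<m. \<Sum>i\<in>UNIV. \<Sum>j\<in>UNIV. f (C r i j))"
    by (simp add: sum.cartesian_product' case_prod_beta UNIV_Times_UNIV[symmetric] del: UNIV_Times_UNIV)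
  finally show ?thesis .
qed

lemma sum_coords_CX: "(\<Sum>c\<in>{CX r i j | r i j. r < m}. f c) = (\<Sum>r<m. \<Sum>i\<in>UNIV. \<Sum>j\<in>UNIV. f (CX r i (j::'n::finite)))"
  by (rule sum_coord_triples) simp

lemma sum_coords_CY: "(\<Sum>c\<in>{CY r i j | r i j. r < m}. f c) = (\<Sum>r<m. \<Sum>i\<in>UNIV. \<Sum>j\<in>UNIV. f (CY r i (j::'n::finite)))"
  by (rule sum_coord_triples) simp

lemma finite_coords: "finite (coords m d :: ('n::finite) coord set)"
proof (rule finite_subset)
  let ?I = "{..<m} \<times> UNIV \<times> (UNIV::'n set)" and ?J = "Sigma {..<m} (\<lambda>s. {..<d s}) \<times> (UNIV::'n set)"
  show "coords m d \<subseteq> (\<lambda>(s, i, j). CX s i j) ` ?I \<union> (\<lambda>(s, i, j). CY s i j) ` ?I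
      \<union> (\<lambda>((s, a), j). CV s a j) ` ?J \<union> (\<lambda>((s, a), j). CW s a j) ` ?J"
    by (auto simp: coords_def image_iff)
qed auto

lemma ham_Hk_eq_qbr_tr:
  fixes p :: "('n::finite) point"
  assumes "\<forall>r<m. invertible (Xm p r)"
  shows "ham m d (Hk m (Suc q)) g p =
    qbr_trX m (\<lambda>r. - (matrix_inv (Xm p r) ** zsuper m q p r ** matrix_inv (Xm p r))) g p
    + qbr_trY m (zsuper m q p) g p"
proof -
  let ?f = "\<lambda>c. pderiv_coord (Hk m (Suc q)) p c * qbr m c g p"
  let ?X = "{CX r i j | r i j. r < m} :: 'n coord set"
  let ?Y = "{CY r i j | r i j. r < m} :: 'n coord set"
  let ?VW = "{CV s a j | s a j. s < m \<and> a < d s} \<union> {CW s a j | s a j. s < m \<and> a < d s} :: 'n coord set"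
  have coords: "coords m d = ?X \<union> ?Y \<union> ?VW"
    by (auto simp: coords_def)
  have "finite (?X \<union> ?Y \<union> ?VW)"
    unfolding coords[symmetric] by (rule finite_coords)
  then have fin: "finite ?X" "finite ?Y" "finite ?VW"
    by auto
  have "ham m d (Hk m (Suc q)) g p = sum ?f (?X \<union> ?Y) + sum ?f ?VW"
    unfolding ham_def coords by (rule sum.union_disjoint) (use fin in auto)
  also have "sum ?f (?X \<union> ?Y) = sum ?f ?X + sum ?f ?Y"
    by (rule sum.union_disjoint) (use fin in auto)
  also have "sum ?f ?VW = 0"
    by (rule sum.neutral) (auto simp: pderiv_coord_Hk_const)
  also have "sum ?f ?X = qbr_trX m (\<lambda>r. - (matrix_inv (Xm p r) ** zsuper m q p r ** matrix_inv (Xm p r))) g p"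
    unfolding sum_coords_CX qbr_trX_def
    using assms by (simp add: pderiv_coord_Hk_CX)
  also have "sum ?f ?Y = qbr_trY m (zsuper m q p) g p"
    unfolding sum_coords_CY qbr_trY_def
    by (simp add: pderiv_coord_Hk_CY)
  finally show ?thesis by simp
qed

text \<open>Simplification rules that evaluate the Kronecker deltas of the bracket and then fold
  the resulting entrywise sums back into matrix products.\<close>

lemma if_zero_mult: "(if P then x else 0) * y = (if P then x * y else (0::'a::mult_zero))"
  by simp

lemma mult_if_zero: "y * (if P then x else 0) = (if P then y * x else (0::'a::mult_zero))"
  by simp

lemma if_zero_divide: "(if P then x else 0) / c = (if P then x / c else (0::'a::field))"
  by simp

lemma sum_if_zero: "(\<Sum>i\<in>A. if P then f i else 0) = (if P then (\<Sum>i\<in>A. f i) else 0)"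
  by simp

lemma sum_if_eq_predm: "(s::nat) < m \<Longrightarrow> (\<Sum>r<m. if s = predm m r then f r else 0) = f (sucm m s)"
  by (subst sum.cong[OF refl, of _ _ "\<lambda>r. if r = sucm m s then f r else 0"])
    (auto simp: eq_predm_iff sucm_less)

lemma sum_if_eq_sucm: "(s::nat) < m \<Longrightarrow> (\<Sum>r<m. if s = sucm m r then f r else 0) = f (predm m s)"
  by (subst sum.cong[OF refl, of _ _ "\<lambda>r. if r = predm m s then f r else 0"])
    (auto simp: eq_sucm_iff predm_less)

lemma matrix_entry_folds:
  fixes A B D :: "'a::field^'n^'n"
  shows "(\<Sum>j\<in>UNIV. A $ k $ j * B $ j $ l) = (A ** B) $ k $ l"
    and "(\<Sum>j\<in>UNIV. B $ j $ l * A $ k $ j) = (A ** B) $ k $ l"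
    and "(\<Sum>j\<in>UNIV. A $ k $ j * B $ j $ l / c) = (A ** B) $ k $ l / c"
    and "(\<Sum>j\<in>UNIV. B $ j $ l * A $ k $ j / c) = (A ** B) $ k $ l / c"
    and "(\<Sum>i\<in>UNIV. \<Sum>j\<in>UNIV. D $ j $ i * (A $ k $ j * B $ i $ l) / c) = (A ** D ** B) $ k $ l / c"
    and "(\<Sum>i\<in>UNIV. \<Sum>j\<in>UNIV. D $ j $ i * (B $ i $ l * A $ k $ j) / c) = (A ** D ** B) $ k $ l / c"
    and "(\<Sum>i\<in>UNIV. \<Sum>j\<in>UNIV. D $ j $ i * (v $ j * A $ i $ l) / c) = ((v v* D) v* A) $ l / c"
    and "(\<Sum>i\<in>UNIV. \<Sum>j\<in>UNIV. D $ j $ i * (A $ l $ j * w $ i) / c) = (A *v (D *v w)) $ l / c"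
    and "(\<Sum>j\<in>UNIV. D $ j $ l * v $ j / c) = (v v* D) $ l / c"
    and "(\<Sum>i\<in>UNIV. D $ l $ i * w $ i / c) = (D *v w) $ l / c"
  by (simp_all add: matrix_mult_entry vector_matrix_mult_def matrix_vector_mult_def
      sum_divide_distrib sum_distrib_left sum_distrib_right mult_ac)
     (rule sum.swap)

lemma less_imp_sucm_less: "s < m \<Longrightarrow> sucm m s < m"
  and less_imp_predm_less: "s < m \<Longrightarrow> predm m s < m"
  by (simp_all add: sucm_less predm_less)

lemmas qbr_collapse = qbr_def dlt_def if_zero_mult mult_if_zero if_zero_divide sum_if_zero
  sum_subtractf sum.distrib ring_distribs sum_if_eq_predm sum_if_eq_sucm predm_sucm sucm_predm
  matrix_entry_folds less_imp_sucm_less less_imp_predm_less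

lemma qbr_trX_CX: "s < m \<Longrightarrow> qbr_trX m DX (CX s k l) p =
  (Xm p s ** Xm p (sucm m s) ** DX (sucm m s)) $ k $ l / 2
  - (DX (predm m s) ** (Xm p (predm m s) ** Xm p s)) $ k $ l / 2"
  by (simp add: qbr_trX_def qbr_collapse)

lemma qbr_trY_CX: "s < m \<Longrightarrow> qbr_trY m DY (CX s k l) p =
  (Ym p (predm m s) ** DY (predm m s) ** Xm p s) $ k $ l / 2
  - (DY s $ k $ l + (DY s ** (Ym p s ** Xm p s)) $ k $ l / 2 + (Xm p s ** Ym p s ** DY s) $ k $ l / 2)
  - (Xm p s ** DY (sucm m s) ** Ym p (sucm m s)) $ k $ l / 2"
  by (simp add: qbr_trY_def qbr_collapse)

lemma qbr_trX_CY: "s < m \<Longrightarrow> qbr_trX m DX (CY s k l) p =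
  DX s $ k $ l + (Ym p s ** Xm p s ** DX s) $ k $ l / 2 + (DX s ** (Xm p s ** Ym p s)) $ k $ l / 2
  - (Xm p (sucm m s) ** DX (sucm m s) ** Ym p s) $ k $ l / 2
  + (Ym p s ** DX (predm m s) ** Xm p (predm m s)) $ k $ l / 2"
  by (simp add: qbr_trX_def qbr_collapse)

lemma qbr_trY_CY: "s < m \<Longrightarrow> qbr_trY m DY (CY s k l) p =
  (DY (sucm m s) ** (Ym p (sucm m s) ** Ym p s)) $ k $ l / 2
  - (Ym p s ** Ym p (predm m s) ** DY (predm m s)) $ k $ l / 2"
  by (simp add: qbr_trY_def qbr_collapse)

lemma qbr_trX_CV: "s < m \<Longrightarrow> qbr_trX m DX (CV s a l) p =
  (Vv p s a v* Xm p s v* DX s) $ l / 2 - (Vv p s a v* DX (predm m s) v* Xm p (predm m s)) $ l / 2"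
  by (simp add: qbr_trX_def qbr_collapse)

lemma qbr_trY_CV: "s < m \<Longrightarrow> qbr_trY m DY (CV s a l) p =
  (Vv p s a v* Ym p (predm m s) v* DY (predm m s)) $ l / 2 - (Vv p s a v* DY s v* Ym p s) $ l / 2"
  by (simp add: qbr_trY_def qbr_collapse)

lemma qbr_trX_CW: "s < m \<Longrightarrow> qbr_trX m DX (CW s a l) p =
  (DX (predm m s) *v (Xm p (predm m s) *v Wv p s a)) $ l / 2 - (Xm p s *v (DX s *v Wv p s a)) $ l / 2"
  by (simp add: qbr_trX_def qbr_collapse)

lemma qbr_trY_CW: "s < m \<Longrightarrow> qbr_trY m DY (CW s a l) p =
  (DY s *v (Ym p s *v Wv p s a)) $ l / 2 - (Ym p (predm m s) *v (DY (predm m s) *v Wv p s a)) $ l / 2"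
  by (simp add: qbr_trY_def qbr_collapse)

text \<open>The algebra closing the computation of the vector field: \<open>X\<^sub>s\<close>, \<open>Y\<^sub>s\<close>, \<open>G\<^sub>s\<close>
  at the cyclic neighbours \<open>s \<pm> 1\<close> are named \<open>Xn, Xp\<close> etc., \<open>Xi\<close> is \<open>X\<^sub>s\<^sup>-\<^sup>1\<close>,
  and the intertwining relations of \<open>G = Z\<^sup>k\<^sup>-\<^sup>1\<close> cancel all terms except \<open>X\<^sub>s Z\<^sub>s G\<^sub>s\<close>.\<close>

lemma ham_CX_identity:
  fixes X Xn Xp Xi Xni Xpi Y Yn Yp Z Zn Zp G Gn Gp :: "complex^'n::finite^'n"
  assumes h1: "Xn ** Xni = mat 1" and h2: "Xpi ** Xp = mat 1" and h3: "Xi ** X = mat 1" and h4: "X ** Xi = mat 1"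
    and z: "Z = Y + Xi" and zn: "Zn = Yn + Xni" and zp: "Zp = Yp + Xpi"
    and pa: "Gn ** Zn = Z ** G" and pb: "Zp ** Gp = G ** Z"
  shows "(X ** Xn ** (-(Xni ** Gn ** Xni))) $ k $ l / 2 - ((-(Xpi ** Gp ** Xpi)) ** (Xp ** X)) $ k $ l / 2 +
   ((Yp ** Gp ** X) $ k $ l / 2 - (G $ k $ l + (G ** (Y ** X)) $ k $ l / 2 + (X ** Y ** G) $ k $ l / 2) - (X ** Gn ** Yn) $ k $ l / 2)
   = - (X ** (Z ** G)) $ k $ l"
proof -
  have t1: "X ** Xn ** (-(Xni ** Gn ** Xni)) = -(X ** Gn ** Xni)"
    by (simp add: matrix_mult_minus_right matrix_mul_assoc matrix_mult_cancel_right[OF h1])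
  have t2: "(-(Xpi ** Gp ** Xpi)) ** (Xp ** X) = -(Xpi ** Gp ** X)"
    by (simp add: matrix_mult_minus_left matrix_mul_assoc matrix_mult_cancel_right[OF h2])
  have e1: "X ** Gn ** Yn + X ** Gn ** Xni = X ** Z ** G"
    using pa by (metis zn matrix_add_ldistrib matrix_mul_assoc)
  have e2: "Yp ** Gp ** X + Xpi ** Gp ** X = G ** Z ** X"
    using pb by (metis zp matrix_add_rdistrib)
  have e3: "G ** Z ** X = G ** Y ** X + G"
    by (simp add: z matrix_add_ldistrib matrix_add_rdistrib matrix_mult_cancel_right[OF h3])
  have e4: "X ** Z ** G = X ** Y ** G + G"
    by (simp add: z matrix_add_ldistrib matrix_add_rdistrib) (metis h4 matrix_mul_lid)
  have E1: "(X ** Gn ** Yn) $ k $ l = (X ** Y ** G) $ k $ l + G $ k $ l - (X ** Gn ** Xni) $ k $ l"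
    using arg_cong[OF e1, of "\<lambda>M. M $ k $ l"] e4 by (simp add: algebra_simps)
  have E2: "(Yp ** Gp ** X) $ k $ l = (G ** Y ** X) $ k $ l + G $ k $ l - (Xpi ** Gp ** X) $ k $ l"
    using arg_cong[OF e2, of "\<lambda>M. M $ k $ l"] e3 by (simp add: algebra_simps)
  have E4: "(X ** Z ** G) $ k $ l = (X ** Y ** G) $ k $ l + G $ k $ l"
    using arg_cong[OF e4, of "\<lambda>M. M $ k $ l"] by simp
  show ?thesis
    unfolding t1 t2 by (simp add: matrix_mul_assoc E1 E2 E4 field_simps)
qed

lemma ham_CY_identity:
  fixes X Xn Xp Xi Xni Xpi Y Yn Yp Z Zn Zp G Gn Gp :: "complex^'n::finite^'n"
  assumes h1: "Xn ** Xni = mat 1" and h2: "Xpi ** Xp = mat 1" and h3: "Xi ** X = mat 1" and h4: "X ** Xi = mat 1"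
    and z: "Z = Y + Xi" and zn: "Zn = Yn + Xni" and zp: "Zp = Yp + Xpi"
    and pa: "Gn ** Zn = Z ** G" and pb: "Zp ** Gp = G ** Z"
  shows "(-(Xi ** G ** Xi)) $ k $ l + (Y ** X ** (-(Xi ** G ** Xi))) $ k $ l / 2 + ((-(Xi ** G ** Xi)) ** (X ** Y)) $ k $ l / 2
   - (Xn ** (-(Xni ** Gn ** Xni)) ** Y) $ k $ l / 2 + (Y ** (-(Xpi ** Gp ** Xpi)) ** Xp) $ k $ l / 2 +
   ((Gn ** (Yn ** Y)) $ k $ l / 2 - (Y ** Yp ** Gp) $ k $ l / 2)
   = - (Z ** G ** Xi) $ k $ l"
proof -
  have t1: "Y ** X ** (-(Xi ** G ** Xi)) = -(Y ** G ** Xi)"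
    by (simp add: matrix_mult_minus_right matrix_mul_assoc matrix_mult_cancel_right[OF h4])
  have t2: "(-(Xi ** G ** Xi)) ** (X ** Y) = -(Xi ** G ** Y)"
    by (simp add: matrix_mult_minus_left matrix_mul_assoc matrix_mult_cancel_right[OF h3])
  have t3: "Xn ** (-(Xni ** Gn ** Xni)) ** Y = -(Gn ** Xni ** Y)"
    by (simp add: matrix_mult_minus_left matrix_mult_minus_right matrix_mul_assoc h1)
  have t4: "Y ** (-(Xpi ** Gp ** Xpi)) ** Xp = -(Y ** Xpi ** Gp)"
    by (simp add: matrix_mult_minus_left matrix_mult_minus_right matrix_mul_assoc matrix_mult_cancel_right[OF h2])
  have e1: "Gn ** Yn ** Y + Gn ** Xni ** Y = Z ** G ** Y"
    using pa by (metis zn matrix_add_ldistrib matrix_add_rdistrib)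
  have e2: "Y ** Yp ** Gp + Y ** Xpi ** Gp = Y ** G ** Z"
    using pb by (metis zp matrix_add_ldistrib matrix_add_rdistrib matrix_mul_assoc)
  have e3: "Z ** G ** Y = Y ** G ** Y + Xi ** G ** Y"
    by (simp add: z matrix_add_rdistrib)
  have e4: "Y ** G ** Z = Y ** G ** Y + Y ** G ** Xi"
    by (simp add: z matrix_add_ldistrib matrix_mul_assoc)
  have e5: "Z ** G ** Xi = Y ** G ** Xi + Xi ** G ** Xi"
    by (simp add: z matrix_add_rdistrib)
  have E1: "(Gn ** Yn ** Y) $ k $ l = (Y ** G ** Y) $ k $ l + (Xi ** G ** Y) $ k $ l - (Gn ** Xni ** Y) $ k $ l"
    using arg_cong[OF e1, of "\<lambda>M. M $ k $ l"] e3 by (simp add: algebra_simps)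
  have E2: "(Y ** Yp ** Gp) $ k $ l = (Y ** G ** Y) $ k $ l + (Y ** G ** Xi) $ k $ l - (Y ** Xpi ** Gp) $ k $ l"
    using arg_cong[OF e2, of "\<lambda>M. M $ k $ l"] e4 by (simp add: algebra_simps)
  have E5: "(Z ** G ** Xi) $ k $ l = (Y ** G ** Xi) $ k $ l + (Xi ** G ** Xi) $ k $ l"
    using arg_cong[OF e5, of "\<lambda>M. M $ k $ l"] by simp
  show ?thesis
    unfolding t1 t2 t3 t4 by (simp add: matrix_mul_assoc E1 E2 E5 field_simps)
qed

lemma ham_CV_identity:
  fixes X Xp Xi Xpi Y Yp Z Zp G Gp :: "complex^'n::finite^'n"
  assumes h2: "Xpi ** Xp = mat 1" and h4: "X ** Xi = mat 1"
    and z: "Z = Y + Xi" and zp: "Zp = Yp + Xpi" and pb: "Zp ** Gp = G ** Z"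
  shows "(v v* X v* (-(Xi ** G ** Xi))) $ l / 2 - (v v* (-(Xpi ** Gp ** Xpi)) v* Xp) $ l / 2 +
     ((v v* Yp v* Gp) $ l / 2 - (v v* G v* Y) $ l / 2) = 0"
proof -
  have t1: "X ** (-(Xi ** G ** Xi)) = -(G ** Xi)"
    by (simp add: matrix_mult_minus_right matrix_mul_assoc h4)
  have t2: "(-(Xpi ** Gp ** Xpi)) ** Xp = -(Xpi ** Gp)"
    by (simp add: matrix_mult_minus_left matrix_mul_assoc matrix_mult_cancel_right[OF h2])
  have e: "(v v* (Yp ** Gp)) $ l + (v v* (Xpi ** Gp)) $ l = (v v* (G ** Y)) $ l + (v v* (G ** Xi)) $ l"
    using arg_cong[OF pb[unfolded z zp], of "\<lambda>M. (v v* M) $ l"] by (simp add: matrix_add_rdistrib matrix_add_ldistrib vector_matrix_mult_add_rdistrib)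
  show ?thesis
    unfolding vector_matrix_mul_assoc t1 t2 using e by (simp add: vector_matrix_mult_minus field_simps) (metis distrib_left)
qed

lemma ham_CW_identity:
  fixes X Xp Xi Xpi Y Yp Z Zp G Gp :: "complex^'n::finite^'n"
  assumes h2: "Xpi ** Xp = mat 1" and h4: "X ** Xi = mat 1"
    and z: "Z = Y + Xi" and zp: "Zp = Yp + Xpi" and pb: "Zp ** Gp = G ** Z"
  shows "((-(Xpi ** Gp ** Xpi)) *v (Xp *v w)) $ l / 2 - (X *v ((-(Xi ** G ** Xi)) *v w)) $ l / 2 +
     ((G *v (Y *v w)) $ l / 2 - (Yp *v (Gp *v w)) $ l / 2) = 0"
proof -
  have t1: "X ** (-(Xi ** G ** Xi)) = -(G ** Xi)"
    by (simp add: matrix_mult_minus_right matrix_mul_assoc h4)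
  have t2: "(-(Xpi ** Gp ** Xpi)) ** Xp = -(Xpi ** Gp)"
    by (simp add: matrix_mult_minus_left matrix_mul_assoc matrix_mult_cancel_right[OF h2])
  have e: "((Yp ** Gp) *v w) $ l + ((Xpi ** Gp) *v w) $ l = ((G ** Y) *v w) $ l + ((G ** Xi) *v w) $ l"
    using arg_cong[OF pb[unfolded z zp], of "\<lambda>M. (M *v w) $ l"] by (simp add: matrix_add_rdistrib matrix_add_ldistrib matrix_vector_mult_add_rdistrib)
  show ?thesis
    unfolding matrix_vector_mul_assoc t1 t2 using e by (simp add: matrix_vector_mult_minus field_simps) (metis distrib_left)
qed


lemma ham_Hk_CX:
  assumes s: "s < m" and inv: "\<forall>r<m. invertible (Xm p r)"
  shows "ham m d (Hk m (Suc q)) (CX s k l) p = - (Xm p s ** zdiag m (Suc q) p (sucm m s)) $ k $ l"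
proof -
  have m: "0 < m" using s by simp
  have "invertible (Xm p s)" "invertible (Xm p (sucm m s))" "invertible (Xm p (predm m s))"
    using inv s by (simp_all add: sucm_less predm_less m)
  then show ?thesis
    unfolding ham_Hk_eq_qbr_tr[OF inv] qbr_trX_CX[OF s] qbr_trY_CX[OF s] zdiag_Suc_sucm[OF m s]
    by (intro ham_CX_identity[OF _ _ _ _ Zs_def Zs_def Zs_def] zsuper_intertwine_sucm[OF m s]
        zsuper_intertwine_predm[OF m s] matrix_inv_left matrix_inv_right)
qed

lemma ham_Hk_CY:
  assumes s: "s < m" and inv: "\<forall>r<m. invertible (Xm p r)"
  shows "ham m d (Hk m (Suc q)) (CY s k l) p = - (zdiag m (Suc q) p (sucm m s) ** matrix_inv (Xm p s)) $ k $ l"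
proof -
  have m: "0 < m" using s by simp
  have "invertible (Xm p s)" "invertible (Xm p (sucm m s))" "invertible (Xm p (predm m s))"
    using inv s by (simp_all add: sucm_less predm_less m)
  then show ?thesis
    unfolding ham_Hk_eq_qbr_tr[OF inv] qbr_trX_CY[OF s] qbr_trY_CY[OF s] zdiag_Suc_sucm[OF m s]
    by (intro ham_CY_identity[OF _ _ _ _ Zs_def Zs_def Zs_def] zsuper_intertwine_sucm[OF m s]
        zsuper_intertwine_predm[OF m s] matrix_inv_left matrix_inv_right)
qed

lemma ham_Hk_CV:
  assumes s: "s < m" and inv: "\<forall>r<m. invertible (Xm p r)"
  shows "ham m d (Hk m (Suc q)) (CV s a l) p = 0"
proof -
  have m: "0 < m" using s by simp
  have "invertible (Xm p s)" "invertible (Xm p (predm m s))"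
    using inv s by (simp_all add: predm_less m)
  then show ?thesis
    unfolding ham_Hk_eq_qbr_tr[OF inv] qbr_trX_CV[OF s] qbr_trY_CV[OF s]
    by (intro ham_CV_identity[OF _ _ Zs_def Zs_def] zsuper_intertwine_predm[OF m s]
        matrix_inv_left matrix_inv_right)
qed

lemma ham_Hk_CW:
  assumes s: "s < m" and inv: "\<forall>r<m. invertible (Xm p r)"
  shows "ham m d (Hk m (Suc q)) (CW s a l) p = 0"
proof -
  have m: "0 < m" using s by simp
  have "invertible (Xm p s)" "invertible (Xm p (predm m s))"
    using inv s by (simp_all add: predm_less m)
  then show ?thesis
    unfolding ham_Hk_eq_qbr_tr[OF inv] qbr_trX_CW[OF s] qbr_trY_CW[OF s]
    by (intro ham_CW_identity[OF _ _ Zs_def Zs_def] zsuper_intertwine_predm[OF m s]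
        matrix_inv_left matrix_inv_right)
qed

section \<open>The flow\<close>

lemma invertible_Xm_of_binvertible:
  assumes "binvertible m (Xbig m p)" and s: "s < m"
  shows "invertible (Xm p s)"
proof -
  have m: "0 < m" using s by simp
  obtain B where B: "\<forall>a<m. \<forall>b<m. bmul m (Xbig m p) B a b = bid m a b"
    using assms(1) unfolding binvertible_def by blast
  have "bmul m (Xbig m p) B s s = Xbig m p s (sucm m s) ** B (sucm m s) s"
    unfolding bmul_def by (rule sum_lessThan_single[OF sucm_less[OF m]]) (simp add: Xbig_def)
  then have "Xm p s ** B (sucm m s) s = mat 1"
    using B s by (simp add: Xbig_def bid_def)
  then show ?thesis
    by (auto simp: invertible_right_inverse)
qed

lemma binvertible_XbigI:
  assumes inv: "\<forall>s<m. invertible (Xm p s)"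
  shows "binvertible m (Xbig m p)"
  unfolding binvertible_def
proof (intro exI allI impI conjI)
  define B where "B = (\<lambda>a b. if a = sucm m b then matrix_inv (Xm p b) else 0)"
  fix a b assume a: "a < m" and b: "b < m"
  then have m: "0 < m" by simp
  have "bmul m (Xbig m p) B a b = Xbig m p a (sucm m a) ** B (sucm m a) b"
    unfolding bmul_def by (rule sum_lessThan_single[OF sucm_less[OF m]]) (simp add: Xbig_def)
  also have "\<dots> = bid m a b"
    using a b inv by (auto simp: Xbig_def B_def bid_def sucm_eq_iff matrix_inv_right)
  finally show "bmul m (Xbig m p) B a b = bid m a b" .
  have "bmul m B (Xbig m p) a b = B a (predm m a) ** Xbig m p (predm m a) b"
    unfolding bmul_def by (rule sum_lessThan_single[OF predm_less[OF m]]) (auto simp: B_def eq_sucm_iff a)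
  also have "\<dots> = bid m a b"
    using a b inv by (auto simp: Xbig_def B_def bid_def sucm_predm matrix_inv_left predm_less[OF m])
  finally show "bmul m B (Xbig m p) a b = bid m a b" .
qed

lemma invertible_add_matrix_inv:
  fixes X Y :: "'a::field^'n^'n"
  assumes X: "invertible X" and XY: "invertible (mat 1 + X ** Y)"
  shows "invertible (Y + matrix_inv X)"
proof -
  have "Y + matrix_inv X = matrix_inv X ** (mat 1 + X ** Y)"
    by (simp add: matrix_add_ldistrib matrix_mul_assoc matrix_inv_left[OF X] add.commute)
  moreover have "invertible (matrix_inv X)"
    using matrix_inv_left[OF X] by (auto simp: invertible_right_inverse)
  ultimately show ?thesis
    using invertible_mult XY by metis
qed

lemma invertible_one_add_diff_matrix_inv:
  fixes X Z :: "'a::field^'n^'n"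
  assumes X: "invertible X" and Z: "invertible Z"
  shows "invertible (mat 1 + X ** (Z - matrix_inv X))" and "invertible (mat 1 + (Z - matrix_inv X) ** X)"
proof -
  have "mat 1 + X ** (Z - matrix_inv X) = X ** Z" and "mat 1 + (Z - matrix_inv X) ** X = Z ** X"
    by (simp_all add: matrix_diff_ldistrib matrix_diff_rdistrib matrix_inv_right[OF X] matrix_inv_left[OF X])
  then show "invertible (mat 1 + X ** (Z - matrix_inv X))" "invertible (mat 1 + (Z - matrix_inv X) ** X)"
    using invertible_mult X Z by simp_all
qed

text \<open>The explicit solution: \<open>X\<^sub>s(t) = X\<^sub>s(0) exp (-t P\<^sub>s\<^sub>+\<^sub>1)\<close>, where \<open>P\<^sub>a\<close> is the \<open>a\<close>-th diagonal
  block of \<open>Z(0)\<^sup>k\<close>, and \<open>Y\<^sub>s(t) = Z\<^sub>s(0) - X\<^sub>s(t)\<^sup>-\<^sup>1\<close>, so that \<open>Z\<close> stays constant.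
  Coordinates with cyclic index \<open>s \<ge> m\<close> are unused and stay frozen.\<close>
definition flow :: "nat \<Rightarrow> nat \<Rightarrow> ('n::finite) point \<Rightarrow> real \<Rightarrow> 'n point" where
  "flow m k p0 t c = (case c of
      CX s i j \<Rightarrow> if s < m then (Xm p0 s ** mexp (zdiag m k p0 (sucm m s)) (-t)) $ i $ j else p0 c
    | CY s i j \<Rightarrow> if s < m then (Zs p0 s - mexp (zdiag m k p0 (sucm m s)) t ** matrix_inv (Xm p0 s)) $ i $ j
                  else p0 c
    | _ \<Rightarrow> p0 c)"

lemma Xm_flow: "s < m \<Longrightarrow> Xm (flow m k p0 t) s = Xm p0 s ** mexp (zdiag m k p0 (sucm m s)) (-t)"
  by (simp add: Xm_def flow_def vec_eq_iff)

lemma Ym_flow: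
  "s < m \<Longrightarrow> Ym (flow m k p0 t) s = Zs p0 s - mexp (zdiag m k p0 (sucm m s)) t ** matrix_inv (Xm p0 s)"
  by (simp add: Ym_def flow_def vec_eq_iff)

lemma Vv_flow: "Vv (flow m k p0 t) s a = Vv p0 s a"
  and Wv_flow: "Wv (flow m k p0 t) s a = Wv p0 s a"
  by (simp_all add: Vv_def Wv_def flow_def)

lemma flow_0: "flow m k p0 0 = p0"
  by (rule ext) (auto simp: flow_def Zs_def Xm_def Ym_def split: coord.split)

lemma matrix_inv_Xm_flow:
  assumes "s < m" and "invertible (Xm p0 s)"
  shows "Xm (flow m k p0 t) s ** (mexp (zdiag m k p0 (sucm m s)) t ** matrix_inv (Xm p0 s)) = mat 1"
    and "matrix_inv (Xm (flow m k p0 t) s) = mexp (zdiag m k p0 (sucm m s)) t ** matrix_inv (Xm p0 s)"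
    and "invertible (Xm (flow m k p0 t) s)"
proof -
  have mexp_inv: "mexp A (-t) ** mexp A t = mat 1" for A :: "complex^'n^'n"
    using mexp_minus_right_inverse[of A "-t"] by simp
  show inv: "Xm (flow m k p0 t) s ** (mexp (zdiag m k p0 (sucm m s)) t ** matrix_inv (Xm p0 s)) = mat 1"
    using assms by (simp add: Xm_flow matrix_mul_assoc matrix_mult_cancel_right[OF mexp_inv] matrix_inv_right)
  then show "matrix_inv (Xm (flow m k p0 t) s) = mexp (zdiag m k p0 (sucm m s)) t ** matrix_inv (Xm p0 s)"
    by (rule matrix_inv_unique)
  show "invertible (Xm (flow m k p0 t) s)"
    using inv by (auto simp: invertible_right_inverse)
qed

lemma invertible_Xm_flow:
  "\<forall>s<m. invertible (Xm p0 s) \<Longrightarrow> \<forall>s<m. invertible (Xm (flow m k p0 t) s)"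
  using matrix_inv_Xm_flow(3) by blast

lemma Zs_flow: "s < m \<Longrightarrow> invertible (Xm p0 s) \<Longrightarrow> Zs (flow m k p0 t) s = Zs p0 s"
  by (simp add: Zs_def[of "flow m k p0 t"] Ym_flow matrix_inv_Xm_flow)

lemma Zbig_flow:
  "b < m \<Longrightarrow> \<forall>s<m. invertible (Xm p0 s) \<Longrightarrow> Zbig m (flow m k p0 t) a b = Zbig m p0 a b"
  by (simp add: Zbig_def Zs_flow)

lemma zdiag_flow:
  "a < m \<Longrightarrow> \<forall>s<m. invertible (Xm p0 s) \<Longrightarrow> zdiag m j (flow m k p0 t) a = zdiag m j p0 a"
  unfolding zdiag_def by (rule bpow_cong) (simp_all add: Zbig_flow)

lemma flow_in_Mcirc:
  assumes "p0 \<in> Mcirc m d"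
  shows "flow m k p0 t \<in> Mcirc m d"
proof -
  have Mb: "p0 \<in> Mbullet m d" and "binvertible m (Xbig m p0)"
    using assms by (auto simp: Mcirc_def)
  then have inv0: "\<forall>s<m. invertible (Xm p0 s)"
    using invertible_Xm_of_binvertible by blast
  have invt: "\<forall>s<m. invertible (Xm (flow m k p0 t) s)"
    using inv0 by (rule invertible_Xm_flow)
  have Zinv: "invertible (Zs p0 s)" if "s < m" for s
    using invertible_add_matrix_inv[of "Xm p0 s" "Ym p0 s"] Mb inv0 that by (auto simp: Mbullet_def Zs_def)
  have Yt: "Ym (flow m k p0 t) s = Zs p0 s - matrix_inv (Xm (flow m k p0 t) s)" if "s < m" for s
    using that inv0 by (simp add: Ym_flow matrix_inv_Xm_flow)
  have "invertible (mat 1 + Xm (flow m k p0 t) s ** Ym (flow m k p0 t) s)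
      \<and> invertible (mat 1 + Ym (flow m k p0 t) s ** Xm (flow m k p0 t) s)" if "s < m" for s
    using invertible_one_add_diff_matrix_inv[OF invt[rule_format, OF that] Zinv[OF that]] Yt[OF that]
    by simp
  then show ?thesis
    using Mb invt binvertible_XbigI by (auto simp: Mcirc_def Mbullet_def Vv_flow Wv_flow)
qed

lemma has_vector_derivative_flow_CX:
  assumes s: "s < m" and inv: "\<forall>r<m. invertible (Xm p0 r)"
  shows "((\<lambda>\<tau>. flow m (Suc q) p0 \<tau> (CX s i j)) has_vector_derivative
           ham m d (Hk m (Suc q)) (CX s i j) (flow m (Suc q) p0 t)) (at t)"
proof -
  let ?P = "zdiag m (Suc q) p0 (sucm m s)"
  have "((\<lambda>\<tau>. \<Sum>l\<in>UNIV. Xm p0 s $ i $ l * mexp ?P (-\<tau>) $ l $ j) has_vector_derivative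
      (\<Sum>l\<in>UNIV. Xm p0 s $ i $ l * - (mexp ?P (-t) ** ?P) $ l $ j)) (at t)"
    by (intro has_vector_derivative_sum has_vector_derivative_mult_right has_vector_derivative_mexp_neg)
  moreover have "ham m d (Hk m (Suc q)) (CX s i j) (flow m (Suc q) p0 t) = - (Xm p0 s ** (mexp ?P (-t) ** ?P)) $ i $ j"
    using s inv
    by (simp add: ham_Hk_CX[OF s invertible_Xm_flow[OF inv]] Xm_flow zdiag_flow less_imp_sucm_less
        matrix_mul_assoc)
  ultimately show ?thesis
    using s by (simp add: flow_def matrix_mult_entry sum_negf)
qed

lemma has_vector_derivative_flow_CY:
  assumes s: "s < m" and inv: "\<forall>r<m. invertible (Xm p0 r)"
  shows "((\<lambda>\<tau>. flow m (Suc q) p0 \<tau> (CY s i j)) has_vector_derivative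
           ham m d (Hk m (Suc q)) (CY s i j) (flow m (Suc q) p0 t)) (at t)"
proof -
  let ?P = "zdiag m (Suc q) p0 (sucm m s)"
  have "((\<lambda>\<tau>. Zs p0 s $ i $ j - (\<Sum>l\<in>UNIV. mexp ?P \<tau> $ i $ l * matrix_inv (Xm p0 s) $ l $ j))
      has_vector_derivative - (\<Sum>l\<in>UNIV. (mexp ?P t ** ?P) $ i $ l * matrix_inv (Xm p0 s) $ l $ j)) (at t)"
    using has_vector_derivative_diff[OF has_vector_derivative_const
        has_vector_derivative_sum[OF has_vector_derivative_mult_left[OF has_vector_derivative_mexp]]]
    by simp
  moreover have "ham m d (Hk m (Suc q)) (CY s i j) (flow m (Suc q) p0 t)
      = - ((mexp ?P t ** ?P) ** matrix_inv (Xm p0 s)) $ i $ j"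
    using s inv
    by (simp add: ham_Hk_CY[OF s invertible_Xm_flow[OF inv]] zdiag_flow less_imp_sucm_less
        matrix_inv_Xm_flow matrix_mul_assoc mexp_commute)
  ultimately show ?thesis
    using s by (simp add: flow_def matrix_mult_entry)
qed

lemma has_vector_derivative_flow:
  assumes c: "c \<in> coords m d" and inv: "\<forall>r<m. invertible (Xm p0 r)"
  shows "((\<lambda>\<tau>. flow m (Suc q) p0 \<tau> c) has_vector_derivative
           ham m d (Hk m (Suc q)) c (flow m (Suc q) p0 t)) (at t)"
proof -
  from c consider (X) s i j where "c = CX s i j" "s < m" | (Y) s i j where "c = CY s i j" "s < m"
    | (V) s a j where "c = CV s a j" "s < m" | (W) s a j where "c = CW s a j" "s < m"
    by (auto simp: coords_def)
  then show ?thesis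
  proof cases
    case X
    then show ?thesis using has_vector_derivative_flow_CX inv by blast
  next
    case Y
    then show ?thesis using has_vector_derivative_flow_CY inv by blast
  next
    case V
    then show ?thesis
      by (simp add: flow_def ham_Hk_CV[OF _ invertible_Xm_flow[OF inv]])
  next
    case W
    then show ?thesis
      by (simp add: flow_def ham_Hk_CW[OF _ invertible_Xm_flow[OF inv]])
  qed
qed

lemma Xbig_flow_eq_bmul_bexp:
  assumes m: "0 < m" and k: "m dvd k" and a: "a < m" and b: "b < m"
  shows "Xbig m (flow m k p0 t) a b =
    bmul m (Xbig m p0) (bexp m (\<lambda>a' b'. (- t) *\<^sub>R bpow m (Zbig m p0) k a' b')) a b"
proof -
  define D where "D = (\<lambda>a' b'. (- t) *\<^sub>R bpow m (Zbig m p0) k a' b')"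
  have "D a' b' = 0" if "a' < m" "b' < m" "a' \<noteq> b'" for a' b'
    using bpow_Zbig_block_diagonal[OF m k that, of p0] by (simp add: D_def)
  then have bpow_D: "bpow m D j c b = (if c = b then mpow (D b b) j else 0)" if "c < m" for c j
    using bpow_block_diagonal[of m D, OF _ that b] by simp
  have bexp_D: "bexp m D c b = (if c = b then mexp (zdiag m k p0 b) (-t) else 0)" if "c < m" for c
  proof -
    have "bexp m D c b = (if c = b then (\<Sum>j. (1 / fact j) *\<^sub>R mpow (D b b) j) else 0)"
      by (simp add: bexp_def bpow_D[OF that])
    also have "(\<Sum>j. (1 / fact j) *\<^sub>R mpow (D b b) j) = mexp (zdiag m k p0 b) (-t)"
      unfolding D_def mexp_def zdiag_def mpow_scaleR ..
    finally show ?thesis .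
  qed
  have "bmul m (Xbig m p0) (bexp m D) a b = Xbig m p0 a (sucm m a) ** bexp m D (sucm m a) b"
    unfolding bmul_def by (intro sum_lessThan_single[OF sucm_less[OF m]]) (simp add: Xbig_def)
  also have "\<dots> = Xbig m (flow m k p0 t) a b"
    using a b sucm_less[OF m] by (simp add: bexp_D Xbig_def Xm_flow)
  finally show ?thesis
    unfolding D_def by simp
qed

theorem proposition3p4:
  fixes m k0 :: nat and d :: "nat \<Rightarrow> nat" and p0 :: "('n::finite) point"
  assumes "m \<ge> 2" and "d 0 \<ge> 1" and "k0 \<ge> 1"
    and "p0 \<in> Mcirc m d"
  shows "\<exists>\<gamma> :: real \<Rightarrow> 'n point.
     \<gamma> 0 = p0 \<and>
     (\<forall>t. \<gamma> t \<in> Mcirc m d) \<and>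
     (\<forall>t. \<forall>a<m. \<forall>b<m. Xbig m (\<gamma> t) a b =
          bmul m (Xbig m p0) (bexp m (\<lambda>a' b'. (- t) *\<^sub>R bpow m (Zbig m p0) (k0 * m) a' b')) a b) \<and>
     (\<forall>t. \<forall>a<m. \<forall>b<m. Zbig m (\<gamma> t) a b = Zbig m p0 a b) \<and>
     (\<forall>t. \<forall>s<m. \<forall>\<alpha><d s. Vv (\<gamma> t) s \<alpha> = Vv p0 s \<alpha> \<and> Wv (\<gamma> t) s \<alpha> = Wv p0 s \<alpha>) \<and>
     (\<forall>c\<in>coords m d. \<forall>t. ((\<lambda>\<tau>. \<gamma> \<tau> c) has_vector_derivative
          ham m d (Hk m (k0 * m)) c (\<gamma> t)) (at t))"
proof (rule exI[where x = "flow m (k0 * m) p0"], intro conjI allI impI ballI)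
  have m: "0 < m"
    using assms(1) by simp
  then obtain q where q: "k0 * m = Suc q"
    using assms(3) not0_implies_Suc by fastforce
  have inv: "\<forall>s<m. invertible (Xm p0 s)"
    using assms(4) invertible_Xm_of_binvertible by (auto simp: Mcirc_def)
  let ?\<gamma> = "flow m (k0 * m) p0"
  show "?\<gamma> 0 = p0"
    by (rule flow_0)
  show "?\<gamma> t \<in> Mcirc m d" for t
    using assms(4) by (rule flow_in_Mcirc)
  show "Xbig m (?\<gamma> t) a b =
      bmul m (Xbig m p0) (bexp m (\<lambda>a' b'. (- t) *\<^sub>R bpow m (Zbig m p0) (k0 * m) a' b')) a b"
    if "a < m" "b < m" for t a b
    by (rule Xbig_flow_eq_bmul_bexp[OF m _ that]) simp
  show "Zbig m (?\<gamma> t) a b = Zbig m p0 a b" if "a < m" "b < m" for t a b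
    using Zbig_flow that inv by blast
  show "Vv (?\<gamma> t) s \<alpha> = Vv p0 s \<alpha>" "Wv (?\<gamma> t) s \<alpha> = Wv p0 s \<alpha>" for t s \<alpha>
    by (simp_all add: Vv_flow Wv_flow)
  show "((\<lambda>\<tau>. ?\<gamma> \<tau> c) has_vector_derivative ham m d (Hk m (k0 * m)) c (?\<gamma> t)) (at t)"
    if "c \<in> coords m d" for c t
    unfolding q using has_vector_derivative_flow[OF that inv] .
qed

end
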